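(* For every $n\ge1$ and $1\le r\le n$, $$t_{n,r}(\mathbf w)=\binom{n-1}{r-1}P_{n-r}(n;\mathbf w),$$ and $t_{n,0}(\mathbf w)=0$. Equivalently, $E_n(t;\mathbf w):=\sum_{r\ge0}t_{n,r}(\mathbf w)t^r=\sum_{r\ge1}\binom{n-1}{r-1}P_{n-r}(n;\mathbf w)\,t^r$. In particular the total weight of rooted spanning hypertrees is $t_{n,1}(\mathbf w)=P_{n-1}(n;\mathbf w)$, and the total weight of (unrooted) spanning hypertrees is $u_{n,1}(\mathbf w)=P_{n-1}(n;\mathbf w)/n$.
   Context: The complete hypergraph $\overline{\mathcal K}_n$ has vertex set $V=\{1,\dots,n\}$ and as hyperedges all subsets $A\subseteq V$ with $|A|\ge2$. A walk connecting $v_0$ to $v_m$ is a sequence $(v_0,e_1,v_1,\dots,e_m,v_m)$ of vertices and hyperedges with $v_{i-1},v_i\in e_i$; a cycle is such a walk with $m\ge2$, $v_0,\dots,v_{m-1}$ distinct, $v_m=v_0$ and $e_1,\dots,e_m$ distinct. A spanning hyperforest is a set $F$ of hyperedges such that $(V,F)$ contains no cycle; its connected components (equivalence classes of vertices under connection by walks in $F$, isolated vertices included) are hypertrees. A rooted spanning hyperforest is a spanning hyperforest with one distinguished vertex (root) in each component. Given weights $\mathbf w=(w_k)_{k\ge2}$, each hyperforest $F$ has weight $\prod_{A\in F}w_{|A|}$. $t_{n,r}(\mathbf w)$ is the total weight of rooted spanning hyperforests of $\overline{\mathcal K}_n$ with exactly $r$ components, and $u_{n,p}(\mathbf w)$ the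 total weight of (unrooted) spanning hyperforests with exactly $p$ components. The polynomials $P_s(x;\mathbf w)$ are defined by $\exp[x\sum_{k\ge2}w_k y^{k-1}/(k-1)!]=\sum_{s\ge0}P_s(x;\mathbf w)y^s/s!$. *)

theory Defs
  imports "HOL-Computational_Algebra.Formal_Power_Series"
begin

definition hyperedges :: "nat \<Rightarrow> nat set set" where
  "hyperedges n = {A. A \<subseteq> {1..n} \<and> 2 \<le> card A}"

text \<open>A walk (v_0,e_1,v_1,...,e_m,v_m) in F: vs = [v_0..v_m], es = [e_1..e_m].\<close>
definition is_walk :: "nat set set \<Rightarrow> nat list \<Rightarrow> nat set list \<Rightarrow> bool" where
  "is_walk F vs es \<longleftrightarrow> length vs = Suc (length es) \<and>
     (\<forall>i < length es. es ! i \<in> F \<and> vs ! i \<in> es ! i \<and> vs ! Suc i \<in> es ! i)"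

definition is_cycle :: "nat set set \<Rightarrow> nat list \<Rightarrow> nat set list \<Rightarrow> bool" where
  "is_cycle F vs es \<longleftrightarrow> is_walk F vs es \<and> 2 \<le> length es \<and>
     distinct (butlast vs) \<and> last vs = hd vs \<and> distinct es"

definition spanning_hyperforest :: "nat \<Rightarrow> nat set set \<Rightarrow> bool" where
  "spanning_hyperforest n F \<longleftrightarrow> F \<subseteq> hyperedges n \<and> \<not> (\<exists>vs es. is_cycle F vs es)"

definition connected_by :: "nat set set \<Rightarrow> nat \<Rightarrow> nat \<Rightarrow> bool" where
  "connected_by F u v \<longleftrightarrow> (\<exists>vs es. is_walk F vs es \<and> hd vs = u \<and> last vs = v)"

definition components :: "nat \<Rightarrow> nat set set \<Rightarrow> nat set set" where
  "components n F = (\<lambda>u. {v \<in> {1..n}. connected_by F u v}) ` {1..n}"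

definition rooted_spanning_hyperforests :: "nat \<Rightarrow> (nat set set \<times> nat set) set" where
  "rooted_spanning_hyperforests n = {(F, R). spanning_hyperforest n F \<and> R \<subseteq> {1..n} \<and>
      (\<forall>C \<in> components n F. card (R \<inter> C) = 1)}"

definition hf_weight :: "(nat \<Rightarrow> 'a::comm_monoid_mult) \<Rightarrow> nat set set \<Rightarrow> 'a" where
  "hf_weight w F = (\<Prod>A\<in>F. w (card A))"

definition t_rooted :: "nat \<Rightarrow> nat \<Rightarrow> (nat \<Rightarrow> 'a::comm_ring_1) \<Rightarrow> 'a" where
  "t_rooted n r w = (\<Sum>(F, R) \<in> {(F, R) \<in> rooted_spanning_hyperforests n.
       card (components n F) = r}. hf_weight w F)"

definition u_unrooted :: "nat \<Rightarrow> nat \<Rightarrow> (nat \<Rightarrow> 'a::comm_ring_1) \<Rightarrow> 'a" where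
  "u_unrooted n p w = (\<Sum>F \<in> {F. spanning_hyperforest n F \<and> card (components n F) = p}.
       hf_weight w F)"

text \<open>P_s(x;w): exp[x \<Sum>_{k\<ge>2} w_k y^{k-1}/(k-1)!] = \<Sum>_s P_s(x;w) y^s/s!.
  The inner series G(y) = \<Sum>_{j\<ge>1} x w_{j+1} y^j / j! has zero constant term,
  and exp(G) is the composition of the exponential series with G.\<close>
definition P_poly :: "nat \<Rightarrow> 'a::field_char_0 \<Rightarrow> (nat \<Rightarrow> 'a) \<Rightarrow> 'a" where
  "P_poly s x w = fact s *
     (fps_nth (fps_exp 1 oo Abs_fps (\<lambda>j. if j = 0 then 0 else x * w (j + 1) / fact j)) s)"

end

theory Submission
  imports Defs
begin

(* Let f(V,R) be the total weight of the hyperforests on a finite vertex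
   set V in which every vertex is connected to exactly one vertex of the root set R \<subseteq> V.
   Removing from such a forest all hyperedges that meet R leaves a rooted forest on V - R
   whose roots R' are the non-root vertices of those removed edges; the removed edges form an
   "attachment" of R' to R: each of them is a root plus a nonempty block of R', the blocks
   partitioning R'.  Conversely gluing any such pair gives back a rooted forest, so
     f(V,R) = \<Sum>_{R' \<subseteq> V-R} f(V-R,R') \<cdot> a(R',R),
   where a(M,R) is the total weight of attachments of M to R.  Splitting off the block
   containing a fixed vertex shows that a(M,R) satisfies the recurrence of the polynomials
   P_s, so a(M,R) = P_{|M|}(|R|).  Solving the recurrence for f gives
     f(V,R) = |R|/|V| \<cdot> P_{|V|-|R|}(|V|),
   which needs two binomial-type identities for P_s, derived from the exponential generating
   function exp(x G(y)).  Summing over root sets of size r yields t_{n,r}; a hypertree has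
   n choices of root, which gives u_{n,1}. *)

unbundle fps_syntax

section \<open>The polynomials \<open>P_s\<close> and their generating function\<close>

definition edge_series :: "(nat \<Rightarrow> 'a::field_char_0) \<Rightarrow> 'a fps" where
  "edge_series w = Abs_fps (\<lambda>j. if j = 0 then 0 else w (j + 1) / fact j)"

definition P_series :: "'a::field_char_0 \<Rightarrow> (nat \<Rightarrow> 'a) \<Rightarrow> 'a fps" where
  "P_series x w = fps_exp 1 oo (fps_const x * edge_series w)"

lemma P_poly_coeff: "P_poly s x w = fact s * P_series x w $ s"
proof -
  have "Abs_fps (\<lambda>j. if j = 0 then 0 else x * w (j + 1) / fact j) = fps_const x * edge_series w"
    by (rule fps_ext) (simp add: edge_series_def)
  then show ?thesis unfolding P_poly_def P_series_def by simp
qed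

lemma P_series_nth: "P_series x w $ k = P_poly k x w / fact k"
  by (simp add: P_poly_coeff)

lemma P_series_0: "P_series x w $ 0 = 1"
  unfolding P_series_def by simp

lemma P_poly_0: "P_poly 0 x w = 1"
  by (simp add: P_poly_coeff P_series_0)

lemma P_series_deriv:
  "fps_deriv (P_series x w) = fps_const x * fps_deriv (edge_series w) * P_series x w"
proof -
  have b0: "(fps_const x * edge_series w) $ 0 = 0" by (simp add: edge_series_def)
  have "fps_deriv (P_series x w) =
      (fps_deriv (fps_exp 1) oo (fps_const x * edge_series w)) * fps_deriv (fps_const x * edge_series w)"
    unfolding P_series_def by (rule fps_compose_deriv[OF b0])
  also have "fps_deriv (fps_exp (1::'a)) = fps_exp 1" by simp
  also have "fps_deriv (fps_const x * edge_series w) = fps_const x * fps_deriv (edge_series w)"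
    by (simp add: fps_deriv_mult_const_left)
  finally show ?thesis unfolding P_series_def by (simp only: mult_ac)
qed

(* A linear first-order ODE f' = h f has at most one power-series solution with a given
   constant term: the coefficients are determined recursively. *)
lemma fps_linear_ode_unique:
  fixes f g h :: "'a::field_char_0 fps"
  assumes "fps_deriv f = h * f" "fps_deriv g = h * g" "f $ 0 = g $ 0"
  shows "f = g"
proof (rule fps_ext)
  fix n show "f $ n = g $ n"
  proof (induction n rule: less_induct)
    case (less n)
    show ?case
    proof (cases n)
      case 0 then show ?thesis using assms(3) by simp
    next
      case (Suc k)
      have "of_nat (k+1) * f $ (k+1) = (h * f) $ k" using assms(1) fps_deriv_nth[of f k] by simp
      also have "\<dots> = (\<Sum>i=0..k. h$i * f$(k - i))" by (simp add: fps_mult_nth)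
      also have "\<dots> = (\<Sum>i=0..k. h$i * g$(k - i))"
        by (rule sum.cong) (use less Suc in auto)
      also have "\<dots> = (h * g) $ k" by (simp add: fps_mult_nth)
      also have "\<dots> = of_nat (k+1) * g $ (k+1)" using assms(2) fps_deriv_nth[of g k] by simp
      finally show ?thesis using Suc by (simp del: of_nat_Suc)
    qed
  qed
qed

(* exp(xG) exp(yG) = exp((x+y)G): both sides solve the same ODE. *)
lemma P_series_add: "P_series x w * P_series y w = P_series (x + y) w"
proof (rule fps_linear_ode_unique[where h = "fps_const (x+y) * fps_deriv (edge_series w)"])
  have "fps_deriv (P_series x w * P_series y w) =
      fps_deriv (P_series x w) * P_series y w + P_series x w * fps_deriv (P_series y w)"
    by simp
  also have "\<dots> = (fps_const x + fps_const y) * fps_deriv (edge_series w) * (P_series x w * P_series y w)"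
    unfolding P_series_deriv by (simp only: distrib_right distrib_left mult_ac)
  finally show "fps_deriv (P_series x w * P_series y w) =
      fps_const (x + y) * fps_deriv (edge_series w) * (P_series x w * P_series y w)"
    by (simp only: fps_const_add)
  show "fps_deriv (P_series (x + y) w) = fps_const (x + y) * fps_deriv (edge_series w) * P_series (x + y) w"
    by (rule P_series_deriv)
  show "(P_series x w * P_series y w) $ 0 = P_series (x + y) w $ 0" by (simp add: P_series_0)
qed

lemma P_poly_binomial:
  "P_poly s (x + y) w = (\<Sum>k=0..s. of_nat (s choose k) * P_poly k x w * P_poly (s - k) y w)"
proof -
  have "P_poly s (x + y) w = fact s * (P_series x w * P_series y w) $ s"
    by (simp add: P_poly_coeff P_series_add)
  also have "\<dots> = (\<Sum>k=0..s. fact s * (P_series x w $ k * P_series y w $ (s - k)))"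
    by (simp add: fps_mult_nth sum_distrib_left)
  also have "\<dots> = (\<Sum>k=0..s. of_nat (s choose k) * P_poly k x w * P_poly (s - k) y w)"
    by (rule sum.cong) (simp_all add: P_series_nth binomial_fact field_simps)
  finally show ?thesis .
qed

lemma edge_series_deriv_nth: "fps_deriv (edge_series w) $ j = w (j + 2) / fact j"
proof -
  have "fps_deriv (edge_series w) $ j = of_nat (j+1) * (w (j + 2) / fact (j+1))"
    by (simp add: edge_series_def)
  also have "\<dots> = w (j + 2) / fact j"
    by (simp add: field_simps del: of_nat_Suc)
  finally show ?thesis .
qed

(* The recurrence P_{m+1}(x) = x \<Sum>_j C(m,j) w_{j+2} P_{m-j}(x), i.e. the ODE coefficientwise;
   it is the recurrence obeyed by the weight of attachments. *)
lemma P_poly_rec: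
  "P_poly (Suc m) x w = x * (\<Sum>j=0..m. of_nat (m choose j) * w (j + 2) * P_poly (m - j) x w)"
proof -
  have "of_nat (m+1) * P_series x w $ (m+1) = (fps_const x * fps_deriv (edge_series w) * P_series x w) $ m"
    using fps_deriv_nth[of "P_series x w" m] by (simp only: P_series_deriv)
  also have "\<dots> = x * (\<Sum>j=0..m. fps_deriv (edge_series w) $ j * P_series x w $ (m - j))"
    unfolding mult.assoc fps_mult_left_const_nth by (simp only: fps_mult_nth)
  finally have eq: "of_nat (m+1) * P_series x w $ (m+1) =
      x * (\<Sum>j=0..m. w (j + 2) / fact j * (P_poly (m - j) x w / fact (m - j)))"
    by (simp del: fps_deriv_nth add: edge_series_deriv_nth P_series_nth)
  have "P_poly (Suc m) x w = fact m * (of_nat (m+1) * P_series x w $ (m+1))"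
    by (simp add: P_poly_coeff)
  also have "\<dots> = x * (\<Sum>j=0..m. fact m * (w (j + 2) / fact j * (P_poly (m - j) x w / fact (m - j))))"
    unfolding eq by (simp add: sum_distrib_left mult_ac)
  also have "\<dots> = x * (\<Sum>j=0..m. of_nat (m choose j) * w (j + 2) * P_poly (m - j) x w)"
    by (intro arg_cong[where f="\<lambda>t. x * t"] sum.cong refl) (simp add: binomial_fact field_simps)
  finally show ?thesis .
qed

(* Coefficient form of (x+y) E_x' E_y = x E_{x+y}', a consequence of the ODE and P_series_add. *)
lemma P_series_weighted_conv:
  "(x + y) * (\<Sum>k=0..n. of_nat k * (P_series x w $ k * P_series y w $ (n - k)))
     = of_nat n * x * P_series (x + y) w $ n"
proof (cases n)
  case 0 then show ?thesis by simp
next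
  case (Suc m)
  have key: "fps_const (x + y) * (fps_deriv (P_series x w) * P_series y w) =
      fps_const x * fps_deriv (P_series (x + y) w)"
  proof -
    have "fps_deriv (P_series (x + y) w) =
        fps_const (x + y) * fps_deriv (edge_series w) * (P_series x w * P_series y w)"
      by (simp only: P_series_deriv P_series_add)
    then show ?thesis unfolding P_series_deriv by (simp only: mult_ac)
  qed
  have "(fps_const (x + y) * (fps_deriv (P_series x w) * P_series y w)) $ m =
      (x + y) * (\<Sum>i=0..m. of_nat (Suc i) * P_series x w $ Suc i * P_series y w $ (m - i))"
    by (subst fps_mult_left_const_nth) (simp only: fps_mult_nth fps_deriv_nth Suc_eq_plus1)
  also have "(\<Sum>i=0..m. of_nat (Suc i) * P_series x w $ Suc i * P_series y w $ (m - i)) =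
      (\<Sum>k=0..n. of_nat k * (P_series x w $ k * P_series y w $ (n - k)))"
    unfolding Suc sum.atLeast0_atMost_Suc_shift by (simp add: mult_ac)
  finally have lhs: "(fps_const (x + y) * (fps_deriv (P_series x w) * P_series y w)) $ m =
      (x + y) * (\<Sum>k=0..n. of_nat k * (P_series x w $ k * P_series y w $ (n - k)))" .
  have rhs: "(fps_const x * fps_deriv (P_series (x + y) w)) $ m = of_nat n * x * P_series (x + y) w $ n"
    using Suc by (simp add: mult_ac)
  show ?thesis using key lhs rhs by metis
qed

lemma P_poly_weighted_binomial:
  "(x + y) * (\<Sum>k=0..n. of_nat (n choose k) * of_nat k * P_poly k x w * P_poly (n - k) y w)
     = of_nat n * x * P_poly n (x + y) w"
proof -
  have "(\<Sum>k=0..n. of_nat (n choose k) * of_nat k * P_poly k x w * P_poly (n - k) y w)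
      = fact n * (\<Sum>k=0..n. of_nat k * (P_series x w $ k * P_series y w $ (n - k)))"
    unfolding sum_distrib_left
    by (rule sum.cong) (simp_all add: binomial_fact P_series_nth field_simps)
  then have "(x + y) * (\<Sum>k=0..n. of_nat (n choose k) * of_nat k * P_poly k x w * P_poly (n - k) y w)
      = fact n * (of_nat n * x * P_series (x + y) w $ n)"
    using P_series_weighted_conv[where x=x and y=y and n=n and w=w] by (simp add: mult_ac)
  also have "\<dots> = of_nat n * x * P_poly n (x + y) w"
    by (simp add: P_poly_coeff mult_ac)
  finally show ?thesis .
qed

section \<open>The claimed closed form and its recurrence\<close>

(* f(n,r) = r/n \<cdot> P_{n-r}(n), the total weight of rooted forests on n vertices with r given
   roots (with the convention f(0,0) = 1). *)
definition forest_formula :: "(nat \<Rightarrow> 'a::field_char_0) \<Rightarrow> nat \<Rightarrow> nat \<Rightarrow> 'a" where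
  "forest_formula w n r = (if n = 0 then 1 else of_nat r / of_nat n * P_poly (n - r) (of_nat n) w)"

(* The summand of the recurrence below, after the reflection m = s - k, split into the
   terms of P_poly_binomial and P_poly_weighted_binomial. *)
lemma forest_formula_reflected_term:
  fixes y :: "'a::field_char_0"
  assumes "k \<le> s" "s \<noteq> 0"
  shows "of_nat (s choose (s - k)) * forest_formula w s (s - k) * P_poly (s - k) y w =
    of_nat (s choose k) * P_poly k (of_nat s) w * P_poly (s - k) y w
      - of_nat (s choose k) * of_nat k * P_poly k (of_nat s) w * P_poly (s - k) y w / of_nat s"
proof -
  have "of_nat (s - k) = (of_nat s :: 'a) - of_nat k" using assms(1) by (simp add: of_nat_diff)
  then show ?thesis
    using assms by (simp add: forest_formula_def binomial_symmetric[OF assms(1), symmetric] field_simps)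
qed

(* f obeys the recurrence that the decomposition of rooted forests produces:
   f(r+s, r) = \<Sum>_m C(s,m) f(s,m) P_m(r). *)
lemma forest_formula_rec:
  assumes r: "1 \<le> r"
  shows "forest_formula w (r + s) r =
    (\<Sum>m=0..s. of_nat (s choose m) * forest_formula w s m * P_poly m (of_nat r) w)"
proof (cases "s = 0")
  case True
  then show ?thesis using r by (simp add: forest_formula_def P_poly_0)
next
  case False
  let ?P = "\<lambda>k x. P_poly k x w"
  let ?x = "of_nat s :: 'a" and ?y = "of_nat r :: 'a"
  let ?W = "\<Sum>k=0..s. of_nat (s choose k) * of_nat k * ?P k ?x * ?P (s - k) ?y"
  have s0: "?x \<noteq> 0" using False by simp
  have xy0: "?x + ?y \<noteq> 0" using r by (metis add_is_0 of_nat_add of_nat_eq_0_iff not_one_le_zero)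
  have W: "?W = ?x * ?x * ?P s (?x + ?y) / (?x + ?y)"
    using P_poly_weighted_binomial[where x="?x" and y="?y" and n=s and w=w] xy0
    by (simp add: field_simps)
  have "(\<Sum>m=0..s. of_nat (s choose m) * forest_formula w s m * ?P m ?y)
      = (\<Sum>k=0..s. of_nat (s choose (s - k)) * forest_formula w s (s - k) * ?P (s - k) ?y)"
    using sum.atLeastAtMost_rev[of "\<lambda>m. of_nat (s choose m) * forest_formula w s m * ?P m ?y" 0 s]
    by simp
  also have "\<dots> = (\<Sum>k=0..s. of_nat (s choose k) * ?P k ?x * ?P (s - k) ?y
        - of_nat (s choose k) * of_nat k * ?P k ?x * ?P (s - k) ?y / ?x)"
    using False by (intro sum.cong refl) (simp add: forest_formula_reflected_term)
  also have "\<dots> = ?P s (?x + ?y) - ?W / ?x"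
    by (simp add: sum_subtractf sum_divide_distrib P_poly_binomial)
  also have "?W / ?x = ?x * ?P s (?x + ?y) / (?x + ?y)"
    unfolding W using s0 by simp
  also have "?P s (?x + ?y) - ?x * ?P s (?x + ?y) / (?x + ?y) = ?y / (?x + ?y) * ?P s (?x + ?y)"
    using xy0 by (simp add: field_simps)
  also have "\<dots> = forest_formula w (r + s) r"
    using r by (simp add: forest_formula_def add.commute)
  finally show ?thesis by simp
qed

section \<open>Walks, connectivity and cycle-freeness\<close>

inductive conn :: "nat set set \<Rightarrow> nat \<Rightarrow> nat \<Rightarrow> bool" for F where
  crefl: "conn F u u"
| cstep: "A \<in> F \<Longrightarrow> u \<in> A \<Longrightarrow> x \<in> A \<Longrightarrow> conn F x v \<Longrightarrow> conn F u v"

lemma conn_trans: "conn F u v \<Longrightarrow> conn F v z \<Longrightarrow> conn F u z"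
  by (induction rule: conn.induct) (auto intro: conn.cstep)

lemma conn_edge: "A \<in> F \<Longrightarrow> u \<in> A \<Longrightarrow> x \<in> A \<Longrightarrow> conn F u x"
  by (rule conn.cstep[OF _ _ _ conn.crefl])

lemma conn_sym: "conn F u v \<Longrightarrow> conn F v u"
proof (induction rule: conn.induct)
  case (crefl u) then show ?case by (rule conn.crefl)
next
  case (cstep A u x v)
  then show ?case using conn_trans conn_edge by metis
qed

lemma conn_mono: "conn F u v \<Longrightarrow> F \<subseteq> G \<Longrightarrow> conn G u v"
  by (induction rule: conn.induct) (auto intro: conn.intros)

lemma conn_inv:
  assumes "conn F u v" "\<And>A x y. A \<in> F \<Longrightarrow> x \<in> A \<Longrightarrow> y \<in> A \<Longrightarrow> f x = f y"
  shows "f u = f v"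
  using assms by (induction rule: conn.induct) metis+

lemma is_walk_Nil: "is_walk F vs [] \<longleftrightarrow> length vs = 1"
  by (simp add: is_walk_def)

lemma is_walk_Cons:
  "is_walk F (u # vs) (A # es) \<longleftrightarrow> A \<in> F \<and> u \<in> A \<and> vs \<noteq> [] \<and> hd vs \<in> A \<and> is_walk F vs es"
proof
  assume h: "is_walk F (u # vs) (A # es)"
  then have len: "length vs = Suc (length es)" by (simp add: is_walk_def)
  then have ne: "vs \<noteq> []" by auto
  have h0: "A \<in> F \<and> u \<in> A \<and> vs ! 0 \<in> A"
    using h unfolding is_walk_def by (metis length_Cons nth_Cons_0 nth_Cons_Suc zero_less_Suc)
  have "\<forall>i < length es. es ! i \<in> F \<and> vs ! i \<in> es ! i \<and> vs ! Suc i \<in> es ! i"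
  proof (intro allI impI)
    fix i assume "i < length es"
    then have "Suc i < length (A # es)" by simp
    with h show "es ! i \<in> F \<and> vs ! i \<in> es ! i \<and> vs ! Suc i \<in> es ! i"
      unfolding is_walk_def by (metis nth_Cons_Suc)
  qed
  then show "A \<in> F \<and> u \<in> A \<and> vs \<noteq> [] \<and> hd vs \<in> A \<and> is_walk F vs es"
    using h0 ne len by (simp add: is_walk_def hd_conv_nth)
next
  assume h: "A \<in> F \<and> u \<in> A \<and> vs \<noteq> [] \<and> hd vs \<in> A \<and> is_walk F vs es"
  have "length (u # vs) = Suc (length (A # es))" using h by (simp add: is_walk_def)
  moreover have "\<forall>i < length (A # es). (A # es) ! i \<in> F \<and> (u # vs) ! i \<in> (A # es) ! i \<and> (u # vs) ! Suc i \<in> (A # es) ! i"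
  proof (intro allI impI)
    fix i assume i: "i < length (A # es)"
    show "(A # es) ! i \<in> F \<and> (u # vs) ! i \<in> (A # es) ! i \<and> (u # vs) ! Suc i \<in> (A # es) ! i"
    proof (cases i)
      case 0 then show ?thesis using h by (auto simp: hd_conv_nth[symmetric])
    next
      case (Suc j)
      then have "j < length es" using i by simp
      then show ?thesis using h Suc by (simp add: is_walk_def)
    qed
  qed
  ultimately show "is_walk F (u # vs) (A # es)" unfolding is_walk_def by blast
qed

lemma walk_conn:
  "is_walk F vs es \<Longrightarrow> conn F (hd vs) (last vs)"
proof (induction es arbitrary: vs)
  case Nil
  then obtain u where "vs = [u]" by (auto simp: is_walk_Nil length_Suc_conv)
  then show ?case by (simp add: conn.crefl)
next
  case (Cons A es)
  then obtain u vs' where vs: "vs = u # vs'"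
    by (cases vs) (auto simp: is_walk_def)
  with Cons.prems have h: "A \<in> F" "u \<in> A" "vs' \<noteq> []" "hd vs' \<in> A" "is_walk F vs' es"
    by (auto simp: is_walk_Cons)
  then have "conn F (hd vs') (last vs')" using Cons.IH by blast
  then show ?case using h vs by (auto intro: conn.cstep)
qed

lemma conn_walk:
  "conn F u v \<Longrightarrow> \<exists>vs es. is_walk F vs es \<and> hd vs = u \<and> last vs = v"
proof (induction rule: conn.induct)
  case (crefl u)
  then show ?case by (intro exI[of _ "[u]"] exI[of _ "[]"]) (simp add: is_walk_Nil)
next
  case (cstep A u x v)
  then obtain vs es where h: "is_walk F vs es" "hd vs = x" "last vs = v" by blast
  then have ne: "vs \<noteq> []" by (auto simp: is_walk_def)
  show ?case
    by (rule exI[of _ "u # vs"], rule exI[of _ "A # es"]) (use h ne cstep in \<open>simp add: is_walk_Cons\<close>)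
qed

lemma connected_by_conn: "connected_by F u v \<longleftrightarrow> conn F u v"
  unfolding connected_by_def using walk_conn conn_walk by metis

lemma walk_mono: "is_walk F vs es \<Longrightarrow> F \<subseteq> G \<Longrightarrow> is_walk G vs es"
  unfolding is_walk_def by blast

lemma walk_drop:
  "is_walk F vs es \<Longrightarrow> i < length vs \<Longrightarrow> is_walk F (drop i vs) (drop i es)"
  unfolding is_walk_def by auto

lemma distinct_nth_notin_drop:
  assumes "distinct xs" "j < length xs"
  shows "xs ! j \<notin> set (drop (Suc j) xs)"
proof -
  have "xs = take (Suc j) xs @ drop (Suc j) xs" by simp
  then have "set (take (Suc j) xs) \<inter> set (drop (Suc j) xs) = {}"
    using assms(1) by (metis distinct_append)
  moreover have "xs ! j \<in> set (take (Suc j) xs)"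
    using assms(2) by (simp add: in_set_conv_nth) (metis lessI nth_take)
  ultimately show ?thesis by blast
qed

(* A path from x to v extends to a path from u to v when u and x share an edge A: prepend A,
   unless u already lies on the path (then cut the path at u) or A already occurs on it (then
   cut the path after A). *)
lemma path_extend:
  assumes h: "is_walk G vs es" "hd vs = x" "last vs = v" "distinct vs" "distinct es"
    and A: "A \<in> G" "u \<in> A" "x \<in> A"
  shows "\<exists>vs es. is_walk G vs es \<and> hd vs = u \<and> last vs = v \<and> distinct vs \<and> distinct es"
proof -
  have ne: "vs \<noteq> []" and len: "length vs = Suc (length es)" using h(1) by (auto simp: is_walk_def)
  show ?thesis
  proof (cases "u \<in> set vs")
    case True
    then obtain i where i: "i < length vs" "vs ! i = u" by (auto simp: in_set_conv_nth)
    show ?thesis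
      by (rule exI[of _ "drop i vs"], rule exI[of _ "drop i es"])
        (use h i walk_drop[OF h(1) i(1)] in \<open>auto simp: hd_drop_conv_nth last_drop\<close>)
  next
    case uv: False
    show ?thesis
    proof (cases "A \<in> set es")
      case True
      then obtain j where j: "j < length es" "es ! j = A" by (auto simp: in_set_conv_nth)
      have w: "is_walk G (drop (Suc j) vs) (drop (Suc j) es)"
        using walk_drop[OF h(1)] j len by simp
      have hdd: "hd (drop (Suc j) vs) = vs ! Suc j" using j len by (simp add: hd_drop_conv_nth)
      have "vs ! Suc j \<in> A" using h(1) j unfolding is_walk_def by blast
      moreover have "drop (Suc j) vs \<noteq> []" using j len by simp
      moreover have "A \<notin> set (drop (Suc j) es)" using distinct_nth_notin_drop[OF h(5) j(1)] j by simp
      moreover have "u \<notin> set (drop (Suc j) vs)" using uv by (meson in_set_dropD)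
      moreover have "last (drop (Suc j) vs) = v" using h j len by (simp add: last_drop)
      ultimately show ?thesis
        using w hdd A h
        by (intro exI[of _ "u # drop (Suc j) vs"] exI[of _ "A # drop (Suc j) es"])
          (simp add: is_walk_Cons)
    next
      case False
      then show ?thesis using uv h ne A
        by (intro exI[of _ "u # vs"] exI[of _ "A # es"]) (simp add: is_walk_Cons)
    qed
  qed
qed

lemma conn_path:
  "conn G u v \<Longrightarrow> \<exists>vs es. is_walk G vs es \<and> hd vs = u \<and> last vs = v \<and> distinct vs \<and> distinct es"
proof (induction rule: conn.induct)
  case (crefl u)
  then show ?case by (intro exI[of _ "[u]"] exI[of _ "[]"]) (simp add: is_walk_Nil)
next
  case (cstep A u x v)
  then show ?case using path_extend by blast
qed

definition cycle_free :: "nat set set \<Rightarrow> bool" where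
  "cycle_free F \<longleftrightarrow> \<not> (\<exists>vs es. is_cycle F vs es)"

lemma last_notin_butlast: "distinct xs \<Longrightarrow> xs \<noteq> [] \<Longrightarrow> last xs \<notin> set (butlast xs)"
  by (metis append_butlast_last_id distinct_append disjoint_iff list.set_intros(1))

(* In a cycle-free F every edge is a bridge: two of its vertices are disconnected once it is
   removed (otherwise a path between them closes up to a cycle). *)
lemma cycle_free_bridge:
  assumes "cycle_free F" "A \<in> F" "a \<in> A" "b \<in> A" "a \<noteq> b"
  shows "\<not> conn (F - {A}) a b"
proof
  assume "conn (F - {A}) a b"
  then obtain vs es where h: "is_walk (F - {A}) vs es" "hd vs = a" "last vs = b" "distinct vs" "distinct es"
    using conn_path by blast
  have ne: "vs \<noteq> []" using h by (auto simp: is_walk_def)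
  have esne: "es \<noteq> []"
  proof
    assume "es = []"
    then have "length vs = 1" using h(1) by (simp add: is_walk_Nil)
    then have "hd vs = last vs" by (cases vs) auto
    then show False using h assms(5) by simp
  qed
  have "is_cycle F (b # vs) (A # es)"
    unfolding is_cycle_def
  proof (intro conjI)
    show "is_walk F (b # vs) (A # es)"
      using h assms ne walk_mono[OF h(1), of F] by (auto simp: is_walk_Cons)
    show "2 \<le> length (A # es)" using esne by (cases es) auto
    show "distinct (butlast (b # vs))"
      using h ne last_notin_butlast[OF h(4) ne] by (simp add: distinct_butlast)
    show "last (b # vs) = hd (b # vs)" using h ne by simp
    show "distinct (A # es)"
      using h(1,5) unfolding is_walk_def by (auto simp: in_set_conv_nth)
  qed
  then show False using assms(1) unfolding cycle_free_def by blast
qed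

lemma walk_segment_conn:
  assumes "is_walk F vs es" "\<And>i. i < length es \<Longrightarrow> j \<le> i \<Longrightarrow> es ! i \<in> G"
    "j \<le> k" "k \<le> length es"
  shows "conn G (vs ! j) (vs ! k)"
  using assms(3,4)
proof (induction k)
  case 0 then show ?case by (simp add: conn.crefl)
next
  case (Suc k)
  show ?case
  proof (cases "j = Suc k")
    case True then show ?thesis by (simp add: conn.crefl)
  next
    case False
    then have jk: "j \<le> k" "k < length es" using Suc by auto
    then have "conn G (vs ! j) (vs ! k)" using Suc by simp
    moreover have "es ! k \<in> G" using assms(2) jk by simp
    moreover have "vs ! k \<in> es ! k" "vs ! Suc k \<in> es ! k" using assms(1) jk unfolding is_walk_def by auto
    ultimately show ?thesis using conn_trans conn_edge by metis
  qed
qed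

(* Conversely, if every edge is a bridge, then F is cycle-free: the first edge of a cycle is
   not a bridge, the rest of the cycle connecting its two ends. *)
lemma cycle_free_if_bridges:
  assumes "\<And>A a b. A \<in> F \<Longrightarrow> a \<in> A \<Longrightarrow> b \<in> A \<Longrightarrow> a \<noteq> b \<Longrightarrow> \<not> conn (F - {A}) a b"
  shows "cycle_free F"
  unfolding cycle_free_def
proof
  assume "\<exists>vs es. is_cycle F vs es"
  then obtain vs es where c: "is_walk F vs es" "2 \<le> length es" "distinct (butlast vs)"
      "last vs = hd vs" "distinct es"
    unfolding is_cycle_def by blast
  let ?m = "length es"
  have len: "length vs = Suc ?m" using c(1) by (simp add: is_walk_def)
  have p: "0 < ?m" using c(2) by linarith
  have A: "es ! 0 \<in> F" "vs ! 0 \<in> es ! 0" "vs ! 1 \<in> es ! 0" using c(1) p unfolding is_walk_def One_nat_def by blast+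
  have "vs ! 0 \<noteq> vs ! 1"
  proof -
    have ii: "0 < length (butlast vs)" "1 < length (butlast vs)" using c(2) len by auto
    have "butlast vs ! 0 = vs ! 0" "butlast vs ! 1 = vs ! 1" using nth_butlast[OF ii(1)] nth_butlast[OF ii(2)] by auto
    moreover have "length (butlast vs) = ?m" using len by simp
    ultimately show ?thesis using c(3) ii nth_eq_iff_index_eq[OF c(3) ii(1) ii(2)] by auto
  qed
  moreover have "conn (F - {es ! 0}) (vs ! 1) (vs ! ?m)"
  proof (rule walk_segment_conn[OF c(1)])
    fix i assume "i < ?m" "1 \<le> i"
    moreover have "0 < ?m" using c(2) by linarith
    ultimately have "es ! i \<noteq> es ! 0" using nth_eq_iff_index_eq[OF c(5), of i 0] by auto
    moreover have "es ! i \<in> F" using c(1) \<open>i < ?m\<close> unfolding is_walk_def by blast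
    ultimately show "es ! i \<in> F - {es ! 0}" by blast
  qed (use c(2) in auto)
  moreover have "vs ! ?m = vs ! 0" using c(4) len
    by (metis diff_Suc_1 hd_conv_nth last_conv_nth list.size(3) nat.distinct(1))
  ultimately show False using assms[OF A] conn_sym by metis
qed

lemma cycle_free_mono:
  assumes "cycle_free F" "G \<subseteq> F"
  shows "cycle_free G"
proof (rule cycle_free_if_bridges)
  fix A a b assume "A \<in> G" "a \<in> A" "b \<in> A" "a \<noteq> b"
  then have "\<not> conn (F - {A}) a b" using cycle_free_bridge assms by blast
  then show "\<not> conn (G - {A}) a b" using conn_mono assms(2) by blast
qed

lemma cycle_free_empty: "cycle_free {}"
  by (rule cycle_free_if_bridges) simp

section \<open>Rooted forests and attachments\<close>

definition edges_on :: "nat set \<Rightarrow> nat set set" where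
  "edges_on V = {A. A \<subseteq> V \<and> 2 \<le> card A}"

(* Cycle-free F on V rooted at R: every vertex reaches some root, and distinct roots are
   disconnected (so each component contains exactly one root). *)
definition rooted_forests :: "nat set \<Rightarrow> nat set \<Rightarrow> nat set set set" where
  "rooted_forests V R = {F. F \<subseteq> edges_on V \<and> cycle_free F \<and> R \<subseteq> V \<and>
      (\<forall>u\<in>V. \<exists>\<rho>\<in>R. conn F u \<rho>) \<and> (\<forall>\<rho>\<in>R. \<forall>\<sigma>\<in>R. conn F \<rho> \<sigma> \<longrightarrow> \<rho> = \<sigma>)}"

definition attachments :: "nat set \<Rightarrow> nat set \<Rightarrow> nat set set set" where
  "attachments M R = {E. (\<forall>A\<in>E. \<exists>\<rho>\<in>R. \<exists>S. A = insert \<rho> S \<and> S \<subseteq> M \<and> S \<noteq> {}) \<and>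
      (\<forall>x\<in>M. \<exists>!A. A \<in> E \<and> x \<in> A)}"

lemma rooted_forests_finite: "finite V \<Longrightarrow> finite (rooted_forests V R)"
proof -
  assume "finite V"
  then have "finite (Pow (edges_on V))" by (simp add: edges_on_def)
  moreover have "rooted_forests V R \<subseteq> Pow (edges_on V)" unfolding rooted_forests_def by blast
  ultimately show ?thesis using finite_subset by blast
qed

lemma rooted_forest_finite: "finite V \<Longrightarrow> F \<in> rooted_forests V R \<Longrightarrow> finite F"
proof -
  assume "finite V" "F \<in> rooted_forests V R"
  moreover have "edges_on V \<subseteq> Pow V" unfolding edges_on_def by blast
  ultimately show ?thesis
    unfolding rooted_forests_def by (metis (no_types, lifting) finite_Pow_iff finite_subset mem_Collect_eq)
qed

lemma rooted_forests_empty: "rooted_forests {} {} = {{}}"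
proof (intro set_eqI iffI)
  fix F assume "F \<in> rooted_forests {} {}"
  then have "F \<subseteq> edges_on {}" unfolding rooted_forests_def by blast
  then show "F \<in> {{}}" unfolding edges_on_def by auto
next
  fix F :: "nat set set" assume "F \<in> {{}}"
  then show "F \<in> rooted_forests {} {}"
    unfolding rooted_forests_def using cycle_free_empty by (simp add: conn.crefl)
qed

lemma rooted_forests_no_root: "V \<noteq> {} \<Longrightarrow> rooted_forests V {} = {}"
  unfolding rooted_forests_def by blast

lemma attachment_edge:
  "E \<in> attachments M R \<Longrightarrow> A \<in> E \<Longrightarrow> \<exists>\<rho>\<in>R. \<exists>S. A = insert \<rho> S \<and> S \<subseteq> M \<and> S \<noteq> {}"
  by (simp add: attachments_def)

lemma attachment_cover: "E \<in> attachments M R \<Longrightarrow> y \<in> M \<Longrightarrow> \<exists>!A. A \<in> E \<and> y \<in> A"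
  by (simp add: attachments_def)

lemma attachmentsI:
  "(\<And>A. A \<in> E \<Longrightarrow> \<exists>\<rho>\<in>R. \<exists>S. A = insert \<rho> S \<and> S \<subseteq> M \<and> S \<noteq> {}) \<Longrightarrow>
   (\<And>y. y \<in> M \<Longrightarrow> \<exists>!A. A \<in> E \<and> y \<in> A) \<Longrightarrow> E \<in> attachments M R"
  by (simp add: attachments_def)

lemma attachment_avoids:
  assumes "E \<in> attachments M R" "x \<notin> M" "x \<notin> R" "B \<in> E"
  shows "x \<notin> B"
  using attachment_edge[OF assms(1,4)] assms(2,3) by blast

lemma attachments_Pow: "E \<in> attachments M R \<Longrightarrow> E \<subseteq> Pow (R \<union> M)"
  using attachment_edge by blast

lemma attachments_finite: "finite M \<Longrightarrow> finite R \<Longrightarrow> finite (attachments M R)"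
  by (rule finite_subset[of _ "Pow (Pow (R \<union> M))"]) (use attachments_Pow in blast, simp)

lemma attachment_finite: "finite M \<Longrightarrow> finite R \<Longrightarrow> E \<in> attachments M R \<Longrightarrow> finite E"
  using attachments_Pow[of E M R] finite_subset by (metis finite_Pow_iff finite_Un)

lemma attachments_empty: "attachments {} R = {{}}"
proof (intro set_eqI iffI)
  fix E assume E: "E \<in> attachments {} R"
  then have "E = {}" using attachment_edge[OF E] by blast
  then show "E \<in> {{}}" by simp
next
  fix E :: "nat set set" assume "E \<in> {{}}"
  then show "E \<in> attachments {} R" by (simp add: attachments_def)
qed

section \<open>Gluing a rooted forest on V - R to an attachment\<close>

(* Given a rooted forest F' on V - R with roots R' and an attachment E of R' to R,
   the union F' \<union> E is a rooted forest on V with roots R, from which F', E and R' can be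
   read off again. *)
locale forest_glue =
  fixes V R R' :: "nat set" and F' E :: "nat set set"
  assumes finV: "finite V" and RV: "R \<subseteq> V" and R'V: "R' \<subseteq> V - R"
    and F': "F' \<in> rooted_forests (V - R) R'" and E: "E \<in> attachments R' R"
begin

lemma F'_edges: "B \<in> F' \<Longrightarrow> B \<subseteq> V - R"
  using F' by (auto simp: rooted_forests_def edges_on_def)

lemma F'_cycle_free: "cycle_free F'" using F' by (simp add: rooted_forests_def)

lemma F'_root: "u \<in> V - R \<Longrightarrow> \<exists>r\<in>R'. conn F' u r" using F' by (simp add: rooted_forests_def)

lemma F'_sep: "r1 \<in> R' \<Longrightarrow> r2 \<in> R' \<Longrightarrow> conn F' r1 r2 \<Longrightarrow> r1 = r2"
  using F' by (simp add: rooted_forests_def)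

lemma E_form: "A \<in> E \<Longrightarrow> \<exists>\<rho>\<in>R. \<exists>S. A = insert \<rho> S \<and> S \<subseteq> R' \<and> S \<noteq> {}"
  using attachment_edge[OF E] .

lemma E_cover: "x \<in> R' \<Longrightarrow> \<exists>A\<in>E. x \<in> A"
  using attachment_cover[OF E] by blast

lemma E_uniq: "x \<in> R' \<Longrightarrow> A \<in> E \<Longrightarrow> B \<in> E \<Longrightarrow> x \<in> A \<Longrightarrow> x \<in> B \<Longrightarrow> A = B"
  using attachment_cover[OF E] by blast

lemma E_root1: "A \<in> E \<Longrightarrow> \<rho> \<in> A \<Longrightarrow> \<rho> \<in> R \<Longrightarrow> \<sigma> \<in> A \<Longrightarrow> \<sigma> \<in> R \<Longrightarrow> \<rho> = \<sigma>"
  using E_form R'V by blast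

lemma E_nonroot: "A \<in> E \<Longrightarrow> x \<in> A \<Longrightarrow> x \<notin> R \<Longrightarrow> x \<in> R'"
  using E_form by blast

lemma E_sub: "A \<in> E \<Longrightarrow> A \<subseteq> V"
  using E_form R'V RV by blast

lemma F'_E_disj: "B \<in> F' \<Longrightarrow> B \<notin> E"
  using F'_edges E_form by blast

(* Each attachment edge has at least two vertices: its root and a nonempty block. *)
lemma glued_edges: "F' \<union> E \<subseteq> edges_on V"
proof
  fix A assume "A \<in> F' \<union> E"
  then show "A \<in> edges_on V"
  proof
    assume "A \<in> F'" then show ?thesis using F' by (auto simp: rooted_forests_def edges_on_def)
  next
    assume A: "A \<in> E"
    then obtain \<rho> S where h: "\<rho> \<in> R" "A = insert \<rho> S" "S \<subseteq> R'" "S \<noteq> {}" using E_form by blast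
    have SV: "S \<subseteq> V - R" using h(3) R'V by (rule order_trans)
    have fs: "finite S" using finite_subset[OF _ finV] SV by blast
    have "\<rho> \<notin> S" using h(1) SV by blast
    then have "card A = Suc (card S)" using h fs by simp
    moreover have "card S \<ge> 1" using fs h by (simp add: Suc_leI card_gt_0_iff)
    ultimately show ?thesis using E_sub[OF A] by (simp add: edges_on_def)
  qed
qed

(* An attachment edge A = {\<rho>} \<union> S is a bridge of F' \<union> E: without A, a vertex a \<in> S only
   reaches vertices of its own F'-tree, which contains no other vertex of A. *)
lemma attach_edge_bridge:
  assumes A: "A \<in> E" "A = insert \<rho> S" "\<rho> \<in> R" "S \<subseteq> R'" and a: "a \<in> S" and b: "b \<in> A" "b \<noteq> a"
  shows "\<not> conn ((F' \<union> E) - {A}) a b"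
proof
  assume c: "conn ((F' \<union> E) - {A}) a b"
  let ?f = "\<lambda>x. x \<in> V - R \<and> conn F' x a"
  have "?f a = ?f b"
  proof (rule conn_inv[OF c])
    fix B x y assume B: "B \<in> F' \<union> E - {A}" and xy: "x \<in> B" "y \<in> B"
    show "?f x = ?f y"
    proof (cases "B \<in> F'")
      case True
      then have "x \<in> V - R" "y \<in> V - R" "conn F' x y" using F'_edges xy conn_edge by blast+
      then show ?thesis using conn_trans conn_sym by blast
    next
      case False
      then have BE: "B \<in> E" "B \<noteq> A" using B by auto
      have "\<not> ?f z" if "z \<in> B" for z
      proof
        assume fz: "?f z"
        then have "z \<in> R'" using E_nonroot[OF BE(1) that] by blast
        moreover have "a \<in> R'" using a A by blast
        ultimately have "z = a" using F'_sep fz by blast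
        then show False using E_uniq[OF \<open>a \<in> R'\<close> A(1) BE(1)] a A(2) that BE(2) by blast
      qed
      then show ?thesis using xy by blast
    qed
  qed
  moreover have "?f a" using a A R'V by (blast intro: conn.crefl)
  moreover have "\<not> ?f b"
  proof
    assume fb: "?f b"
    then have "b \<noteq> \<rho>" using A by blast
    then have "b \<in> R'" using b A by blast
    moreover have "a \<in> R'" using a A by blast
    ultimately show False using F'_sep fb b by blast
  qed
  ultimately show False by blast
qed

(* An edge A of F' whose removal cuts a off from all roots R' is a bridge of F' \<union> E:
   without A, a only reaches vertices of its F'-component, which meets no attachment edge. *)
lemma forest_edge_bridge:
  assumes A: "A \<in> F'" and a: "a \<in> V - R" and nr: "\<forall>r\<in>R'. \<not> conn (F' - {A}) a r"
    and nab: "\<not> conn (F' - {A}) a b"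
  shows "\<not> conn ((F' \<union> E) - {A}) a b"
proof
  assume c: "conn ((F' \<union> E) - {A}) a b"
  let ?f = "\<lambda>x. x \<in> V - R \<and> conn (F' - {A}) a x"
  have "?f a = ?f b"
  proof (rule conn_inv[OF c])
    fix B x y assume B: "B \<in> F' \<union> E - {A}" and xy: "x \<in> B" "y \<in> B"
    show "?f x = ?f y"
    proof (cases "B \<in> F'")
      case True
      then have "x \<in> V - R" "y \<in> V - R" "conn (F' - {A}) x y"
        using F'_edges xy B conn_edge[of B "F' - {A}"] by blast+
      then show ?thesis using conn_trans conn_sym by blast
    next
      case False
      then have BE: "B \<in> E" using B by auto
      have "\<not> ?f z" if "z \<in> B" for z
        using E_nonroot[OF BE that] nr by blast
      then show ?thesis using xy by blast
    qed
  qed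
  moreover have "?f a" using a by (blast intro: conn.crefl)
  ultimately show False using nab by blast
qed

(* Every edge of F' is a bridge of F' \<union> E: it separates its vertices already in F', and the side
   not containing the root of their F'-tree is cut off from R', so forest_edge_bridge applies. *)
lemma F'_edge_bridge:
  assumes AF: "A \<in> F'" and ab: "a \<in> A" "b \<in> A" "a \<noteq> b"
  shows "\<not> conn (F' \<union> E - {A}) a b"
proof -
  have abV: "a \<in> V - R" "b \<in> V - R" using F'_edges[OF AF] ab by blast+
  have nab: "\<not> conn (F' - {A}) a b" using cycle_free_bridge[OF F'_cycle_free AF ab] .
  show ?thesis
  proof (cases "\<forall>r\<in>R'. \<not> conn (F' - {A}) a r")
    case True then show ?thesis using forest_edge_bridge[OF AF abV(1) True nab] by blast
  next
    case False
    then obtain r1 where r1: "r1 \<in> R'" "conn (F' - {A}) a r1" by blast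
    have "\<forall>r\<in>R'. \<not> conn (F' - {A}) b r"
    proof (intro ballI notI)
      fix r2 assume r2: "r2 \<in> R'" "conn (F' - {A}) b r2"
      have "conn F' r1 a" using r1 conn_mono conn_sym by (metis Diff_subset)
      moreover have "conn F' a b" using conn_edge[OF AF ab(1,2)] .
      moreover have "conn F' b r2" using r2 conn_mono by (metis Diff_subset)
      ultimately have "r1 = r2" using F'_sep r1 r2 conn_trans by blast
      then have "conn (F' - {A}) a b" using r1 r2 conn_trans conn_sym by metis
      then show False using nab by blast
    qed
    moreover have "\<not> conn (F' - {A}) b a" using nab conn_sym by blast
    ultimately have "\<not> conn (F' \<union> E - {A}) b a" using forest_edge_bridge[OF AF abV(2)] by blast
    then show ?thesis using conn_sym by blast
  qed
qed

lemma glued_cycle_free: "cycle_free (F' \<union> E)"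
proof (rule cycle_free_if_bridges)
  fix A a b assume A: "A \<in> F' \<union> E" and ab: "a \<in> A" "b \<in> A" "a \<noteq> b"
  show "\<not> conn (F' \<union> E - {A}) a b"
  proof (cases "A \<in> E")
    case True
    then obtain \<rho> S where h: "\<rho> \<in> R" "A = insert \<rho> S" "S \<subseteq> R'" using E_form by blast
    show ?thesis
    proof (cases "a \<in> S")
      case True then show ?thesis using attach_edge_bridge[OF \<open>A \<in> E\<close> h(2,1,3) True ab(2)] ab by blast
    next
      case False
      then have "b \<in> S" using ab h by blast
      then have "\<not> conn (F' \<union> E - {A}) b a" using attach_edge_bridge[OF \<open>A \<in> E\<close> h(2,1,3) _ ab(1)] ab by blast
      then show ?thesis using conn_sym by blast
    qed
  next
    case False
    then show ?thesis using F'_edge_bridge A ab by blast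
  qed
qed

(* Every vertex reaches a root: through its F'-tree to a vertex of R', then through its
   attachment edge. *)
lemma glued_reach_root: "u \<in> V \<Longrightarrow> \<exists>\<rho>\<in>R. conn (F' \<union> E) u \<rho>"
proof -
  assume u: "u \<in> V"
  show ?thesis
  proof (cases "u \<in> R")
    case True then show ?thesis by (blast intro: conn.crefl)
  next
    case False
    then obtain r where r: "r \<in> R'" "conn F' u r" using F'_root u by blast
    then obtain A where A: "A \<in> E" "r \<in> A" using E_cover by blast
    then obtain \<rho> S where h: "\<rho> \<in> R" "A = insert \<rho> S" using E_form by blast
    have "conn (F' \<union> E) u r" using r conn_mono by blast
    moreover have "conn (F' \<union> E) r \<rho>" using conn_edge[of A "F' \<union> E" r \<rho>] A h by blast
    ultimately show ?thesis using h conn_trans by blast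
  qed
qed

(* The vertices attached to the root \<rho>: \<rho> itself and the non-roots whose F'-tree contains a
   vertex of an attachment edge through \<rho>.  This set is a union of components of F' \<union> E. *)
definition attached_to :: "nat \<Rightarrow> nat \<Rightarrow> bool" where
  "attached_to \<rho> x \<longleftrightarrow> x = \<rho> \<or> (x \<in> V - R \<and> (\<exists>A\<in>E. \<rho> \<in> A \<and> (\<exists>r\<in>A \<inter> R'. conn F' x r)))"

lemma attached_to_edge:
  assumes r: "\<rho> \<in> R" and B: "B \<in> F' \<union> E" and xy: "x \<in> B" "y \<in> B"
  shows "attached_to \<rho> x = attached_to \<rho> y"
proof (cases "B \<in> F'")
  case True
  then have xyV: "x \<in> V - R" "y \<in> V - R" using F'_edges xy by blast+
  have "conn F' x y" "conn F' y x" using True xy conn_edge by blast+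
  then show ?thesis using xyV r conn_trans unfolding attached_to_def by blast
next
  case False
  then have BE: "B \<in> E" using B by auto
  show ?thesis
  proof (cases "\<rho> \<in> B")
    case True
    have "attached_to \<rho> z" if "z \<in> B" for z
    proof (cases "z = \<rho>")
      case False
      then have "z \<notin> R" using E_root1[OF BE True r that] by blast
      then have zR: "z \<in> R'" using E_nonroot[OF BE that] by blast
      then show ?thesis using BE True that R'V conn.crefl unfolding attached_to_def by blast
    qed (simp add: attached_to_def)
    then show ?thesis using xy by blast
  next
    case False
    have "\<not> attached_to \<rho> z" if "z \<in> B" for z
    proof
      assume fz: "attached_to \<rho> z"
      have "z \<noteq> \<rho>" using False that by blast
      then obtain A r' where Ar: "A \<in> E" "\<rho> \<in> A" "r' \<in> A \<inter> R'" "conn F' z r'" "z \<in> V - R"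
        using fz unfolding attached_to_def by blast
      have zR: "z \<in> R'" using E_nonroot[OF BE that] Ar(5) by blast
      then have "z = r'" using F'_sep Ar(3,4) by blast
      then have "A = B" using E_uniq[OF zR Ar(1) BE] Ar(3) that by blast
      then show False using Ar False by blast
    qed
    then show ?thesis using xy by blast
  qed
qed

lemma glued_roots_separated:
  assumes "\<rho> \<in> R" "\<sigma> \<in> R" "conn (F' \<union> E) \<rho> \<sigma>"
  shows "\<rho> = \<sigma>"
proof -
  have "attached_to \<rho> \<rho> = attached_to \<rho> \<sigma>"
    using conn_inv[OF assms(3)] attached_to_edge[OF assms(1)] by blast
  then show ?thesis using assms(2) unfolding attached_to_def by blast
qed

lemma glued_rooted_forest: "F' \<union> E \<in> rooted_forests V R"
  unfolding rooted_forests_def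
proof (intro CollectI conjI ballI impI)
  show "F' \<union> E \<subseteq> edges_on V" by (rule glued_edges)
  show "cycle_free (F' \<union> E)" by (rule glued_cycle_free)
  show "R \<subseteq> V" by (rule RV)
  show "\<exists>\<rho>\<in>R. conn (F' \<union> E) u \<rho>" if "u \<in> V" for u by (rule glued_reach_root[OF that])
  show "\<rho> = \<sigma>" if "\<rho> \<in> R" "\<sigma> \<in> R" "conn (F' \<union> E) \<rho> \<sigma>" for \<rho> \<sigma> by (rule glued_roots_separated[OF that])
qed

lemma E_meets: "A \<in> E \<Longrightarrow> A \<inter> R \<noteq> {}"
  using E_form by blast

lemma F'_avoids: "A \<in> F' \<Longrightarrow> A \<inter> R = {}"
  using F'_edges by blast

lemma recover_E: "E = {A \<in> F' \<union> E. A \<inter> R \<noteq> {}}"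
proof (intro set_eqI iffI)
  fix A assume "A \<in> E" then show "A \<in> {A \<in> F' \<union> E. A \<inter> R \<noteq> {}}" using E_meets by blast
next
  fix A assume "A \<in> {A \<in> F' \<union> E. A \<inter> R \<noteq> {}}"
  then have "A \<in> F' \<union> E" "A \<inter> R \<noteq> {}" by auto
  then show "A \<in> E" using F'_avoids by blast
qed

lemma recover_F': "F' = (F' \<union> E) - E"
  using F'_E_disj by blast

lemma recover_R': "R' = \<Union>E - R"
proof
  show "R' \<subseteq> \<Union>E - R" using E_cover R'V by blast
  show "\<Union>E - R \<subseteq> R'" using E_nonroot by blast
qed

end

section \<open>Splitting a rooted forest at its roots\<close>

(* Conversely, a rooted forest F on V with roots R splits into the edges meeting R, which
   form an attachment of the second-level roots R' to R, and a rooted forest on V - R with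
   roots R'. *)
locale forest_split =
  fixes V R :: "nat set" and F :: "nat set set"
  assumes F: "F \<in> rooted_forests V R"
begin

definition top_edges :: "nat set set" where "top_edges = {A \<in> F. A \<inter> R \<noteq> {}}"
definition lower_forest :: "nat set set" where "lower_forest = F - top_edges"
definition second_roots :: "nat set" where "second_roots = \<Union>top_edges - R"

lemma F_edges: "A \<in> F \<Longrightarrow> A \<subseteq> V" and F_card: "A \<in> F \<Longrightarrow> 2 \<le> card A"
  using F by (auto simp: rooted_forests_def edges_on_def)

lemma F_cycle_free: "cycle_free F" using F by (simp add: rooted_forests_def)
lemma F_root: "u \<in> V \<Longrightarrow> \<exists>\<rho>\<in>R. conn F u \<rho>" using F by (simp add: rooted_forests_def)
lemma F_sep: "\<rho> \<in> R \<Longrightarrow> \<sigma> \<in> R \<Longrightarrow> conn F \<rho> \<sigma> \<Longrightarrow> \<rho> = \<sigma>" using F by (simp add: rooted_forests_def)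

lemma two_roots: "A \<in> F \<Longrightarrow> \<rho> \<in> A \<Longrightarrow> \<sigma> \<in> A \<Longrightarrow> \<rho> \<in> R \<Longrightarrow> \<sigma> \<in> R \<Longrightarrow> \<rho> = \<sigma>"
  using F_sep conn_edge by metis

lemma lower_forest_sub: "lower_forest \<subseteq> F" unfolding lower_forest_def by blast
lemma lower_forest_edges: "B \<in> lower_forest \<Longrightarrow> B \<subseteq> V - R"
  unfolding lower_forest_def top_edges_def using F_edges by blast

lemma top_edges_nonroot: "A \<in> top_edges \<Longrightarrow> x \<in> A \<Longrightarrow> x \<notin> R \<Longrightarrow> x \<in> second_roots"
  unfolding second_roots_def by blast

lemma second_roots_sub: "second_roots \<subseteq> V - R"
  unfolding second_roots_def top_edges_def using F_edges by blast

(* Every vertex of V - R reaches a second-level root inside the lower forest: its path to a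
   root in F must enter a top edge, and the vertex where it does so is in R'. *)
lemma lower_forest_reach:
  assumes u: "u \<in> V - R"
  shows "\<exists>r\<in>second_roots. conn lower_forest u r"
proof (rule ccontr)
  assume nr: "\<not> (\<exists>r\<in>second_roots. conn lower_forest u r)"
  obtain \<rho> where \<rho>: "\<rho> \<in> R" "conn F u \<rho>" using F_root u by blast
  define f where "f x \<longleftrightarrow> x \<in> V - R \<and> conn lower_forest u x" for x
  have "f u = f \<rho>"
  proof (rule conn_inv[OF \<rho>(2)])
    fix B x y assume B: "B \<in> F" and xy: "x \<in> B" "y \<in> B"
    show "f x = f y"
    proof (cases "B \<in> lower_forest")
      case True
      then have "x \<in> V - R" "y \<in> V - R" "conn lower_forest x y" "conn lower_forest y x"
        using lower_forest_edges xy conn_edge by blast+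
      then show ?thesis unfolding f_def using conn_trans by blast
    next
      case False
      then have BE: "B \<in> top_edges" using B unfolding lower_forest_def by blast
      have "\<not> f z" if "z \<in> B" for z
        using top_edges_nonroot[OF BE that] nr unfolding f_def by blast
      then show ?thesis using xy by blast
    qed
  qed
  moreover have "f u" using u unfolding f_def by (simp add: conn.crefl)
  moreover have "\<not> f \<rho>" using \<rho> unfolding f_def by blast
  ultimately show False by blast
qed

(* Distinct second-level roots are disconnected in the lower forest: otherwise they, together
   with their top edges and roots, would violate the bridge property of F. *)
lemma second_roots_separated:
  assumes r: "r1 \<in> second_roots" "r2 \<in> second_roots" "conn lower_forest r1 r2"
  shows "r1 = r2"
proof (rule ccontr)
  assume ne: "r1 \<noteq> r2"
  obtain A1 \<rho>1 where A1: "A1 \<in> F" "r1 \<in> A1" "\<rho>1 \<in> A1" "\<rho>1 \<in> R" "r1 \<notin> R"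
    using r(1) unfolding second_roots_def top_edges_def by blast
  obtain A2 \<rho>2 where A2: "A2 \<in> F" "r2 \<in> A2" "\<rho>2 \<in> A2" "\<rho>2 \<in> R" "r2 \<notin> R"
    using r(2) unfolding second_roots_def top_edges_def by blast
  have A1E: "A1 \<notin> lower_forest" using A1 unfolding lower_forest_def top_edges_def by blast
  have cF: "conn F r1 r2" using conn_mono[OF r(3) lower_forest_sub] .
  have "conn F \<rho>1 \<rho>2"
    using conn_edge[OF A1(1,3,2)] cF conn_edge[OF A2(1,2,3)] conn_trans by metis
  then have eq: "\<rho>1 = \<rho>2" using F_sep A1 A2 by blast
  have sub: "lower_forest \<subseteq> F - {A1}" using A1E lower_forest_sub by blast
  show False
  proof (cases "A1 = A2")
    case True
    have "conn (F - {A1}) r1 r2" using conn_mono[OF r(3) sub] .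
    then show False using cycle_free_bridge[OF F_cycle_free A1(1,2)] A2(2) True ne by blast
  next
    case False
    have "A2 \<in> F - {A1}" using A2 False by blast
    then have "conn (F - {A1}) \<rho>1 r2" using conn_edge A2(2,3) eq by metis
    moreover have "conn (F - {A1}) r2 r1" using conn_sym conn_mono[OF r(3) sub] by blast
    ultimately have "conn (F - {A1}) \<rho>1 r1" using conn_trans by blast
    moreover have "\<rho>1 \<noteq> r1" using A1 by blast
    ultimately show False using cycle_free_bridge[OF F_cycle_free A1(1,3,2)] by blast
  qed
qed

lemma lower_forest_rooted: "lower_forest \<in> rooted_forests (V - R) second_roots"
  unfolding rooted_forests_def
proof (intro CollectI conjI ballI impI)
  show "lower_forest \<subseteq> edges_on (V - R)"
    using lower_forest_edges lower_forest_sub F_card by (auto simp: edges_on_def)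
  show "cycle_free lower_forest" using cycle_free_mono[OF F_cycle_free lower_forest_sub] .
  show "second_roots \<subseteq> V - R" by (rule second_roots_sub)
qed (use lower_forest_reach second_roots_separated in blast)+

lemma top_edge_form:
  assumes A: "A \<in> top_edges"
  shows "\<exists>\<rho>\<in>R. \<exists>S. A = insert \<rho> S \<and> S \<subseteq> second_roots \<and> S \<noteq> {}"
proof -
  obtain \<rho> where \<rho>: "\<rho> \<in> A" "\<rho> \<in> R" using A unfolding top_edges_def by blast
  have AF: "A \<in> F" using A unfolding top_edges_def by blast
  have "A - {\<rho>} \<subseteq> second_roots"
    using two_roots[OF AF \<rho>(1) _ \<rho>(2)] top_edges_nonroot[OF A] by blast
  moreover have "A - {\<rho>} \<noteq> {}"
  proof
    assume "A - {\<rho>} = {}"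
    then have "A = {\<rho>}" using \<rho> by blast
    then show False using F_card[OF AF] by simp
  qed
  moreover have "A = insert \<rho> (A - {\<rho>})" using \<rho> by blast
  ultimately show ?thesis using \<rho>(2) by blast
qed

(* A second-level root x lies in only one top edge: two top edges A, B through x have the same
   root (roots are separated in F), so B connects that root to x avoiding the bridge A. *)
lemma top_edge_unique:
  assumes x: "x \<in> second_roots" and A: "A \<in> top_edges" "x \<in> A" and B: "B \<in> top_edges" "x \<in> B"
  shows "B = A"
proof (rule ccontr)
  assume ne: "B \<noteq> A"
  have xR: "x \<notin> R" using x unfolding second_roots_def by blast
  obtain \<rho> where \<rho>: "\<rho> \<in> A" "\<rho> \<in> R" using A(1) unfolding top_edges_def by blast
  obtain \<sigma> where \<sigma>: "\<sigma> \<in> B" "\<sigma> \<in> R" using B(1) unfolding top_edges_def by blast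
  have AF: "A \<in> F" and BF: "B \<in> F" using A B unfolding top_edges_def by blast+
  have "conn F \<rho> \<sigma>" using conn_edge[OF AF \<rho>(1) A(2)] conn_edge[OF BF B(2) \<sigma>(1)] conn_trans by metis
  then have "\<rho> = \<sigma>" using F_sep \<rho> \<sigma> by blast
  moreover have "B \<in> F - {A}" using BF ne by blast
  ultimately have "conn (F - {A}) \<rho> x" using conn_edge \<sigma>(1) B(2) by metis
  moreover have "\<rho> \<noteq> x" using xR \<rho> by blast
  ultimately show False using cycle_free_bridge[OF F_cycle_free AF \<rho>(1) A(2)] by blast
qed

lemma top_edges_attachment: "top_edges \<in> attachments second_roots R"
proof (rule attachmentsI)
  show "\<exists>!A. A \<in> top_edges \<and> x \<in> A" if x: "x \<in> second_roots" for x
  proof -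
    obtain A where "A \<in> top_edges" "x \<in> A" using x unfolding second_roots_def by blast
    then show ?thesis using top_edge_unique[OF x] by blast
  qed
qed (rule top_edge_form)

lemma F_split: "F = lower_forest \<union> top_edges" unfolding lower_forest_def top_edges_def by blast

end

section \<open>The recurrence for the weight of rooted forests\<close>

(* Triples (R', F', E) that can be glued, and the gluing map; by the two locales above it is a
   bijection onto the rooted forests on V with roots R. *)
definition glue_data :: "nat set \<Rightarrow> nat set \<Rightarrow> (nat set \<times> nat set set \<times> nat set set) set" where
  "glue_data V R = Sigma (Pow (V - R)) (\<lambda>R'. rooted_forests (V - R) R' \<times> attachments R' R)"

definition glue :: "nat set \<times> nat set set \<times> nat set set \<Rightarrow> nat set set" where
  "glue = (\<lambda>(R', F', E). F' \<union> E)"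

lemma glue_data_mem:
  "(R', F', E) \<in> glue_data V R \<longleftrightarrow>
     R' \<subseteq> V - R \<and> F' \<in> rooted_forests (V - R) R' \<and> E \<in> attachments R' R"
  unfolding glue_data_def by auto

lemma forest_glue_data:
  "finite V \<Longrightarrow> R \<subseteq> V \<Longrightarrow> (R', F', E) \<in> glue_data V R \<Longrightarrow> forest_glue V R R' F' E"
  unfolding glue_data_mem by unfold_locales auto

lemma glue_inj:
  assumes V: "finite V" and R: "R \<subseteq> V"
  shows "inj_on glue (glue_data V R)"
proof (rule inj_onI)
  fix a b assume a: "a \<in> glue_data V R" and b: "b \<in> glue_data V R" and eq: "glue a = glue b"
  obtain R1 F1 E1 where a': "a = (R1, F1, E1)" using prod.collapse by metis
  obtain R2 F2 E2 where b': "b = (R2, F2, E2)" using prod.collapse by metis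
  interpret c1: forest_glue V R R1 F1 E1 using forest_glue_data[OF V R] a a' by simp
  interpret c2: forest_glue V R R2 F2 E2 using forest_glue_data[OF V R] b b' by simp
  have G: "F1 \<union> E1 = F2 \<union> E2" using eq a' b' unfolding glue_def by simp
  have e: "E1 = E2" using c1.recover_E c2.recover_E G by simp
  have f: "F1 = F2" using c1.recover_F' c2.recover_F' G e by simp
  have r: "R1 = R2" using c1.recover_R' c2.recover_R' e by simp
  show "a = b" using a' b' e f r by simp
qed

lemma glue_image:
  assumes V: "finite V" and R: "R \<subseteq> V"
  shows "glue ` glue_data V R = rooted_forests V R"
proof (intro set_eqI iffI)
  fix F assume "F \<in> glue ` glue_data V R"
  then obtain R1 F1 E1 where t: "(R1, F1, E1) \<in> glue_data V R" "F = glue (R1, F1, E1)"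
    by (metis prod.collapse image_iff)
  interpret c1: forest_glue V R R1 F1 E1 using forest_glue_data[OF V R t(1)] .
  show "F \<in> rooted_forests V R" using c1.glued_rooted_forest t unfolding glue_def by simp
next
  fix F assume F: "F \<in> rooted_forests V R"
  interpret d: forest_split V R F using F by unfold_locales
  have "(d.second_roots, d.lower_forest, d.top_edges) \<in> glue_data V R"
    unfolding glue_data_mem using d.second_roots_sub d.lower_forest_rooted d.top_edges_attachment by blast
  moreover have "glue (d.second_roots, d.lower_forest, d.top_edges) = F"
    unfolding glue_def using d.F_split by simp
  ultimately show "F \<in> glue ` glue_data V R" by (metis image_eqI)
qed

lemma glue_weight:
  assumes V: "finite V" and R: "R \<subseteq> V" and t: "(R', F', E) \<in> glue_data V R"
  shows "hf_weight w (glue (R', F', E)) = hf_weight w F' * hf_weight w E"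
proof -
  interpret c: forest_glue V R R' F' E using forest_glue_data[OF V R t] .
  have "finite F'" using rooted_forest_finite[OF _ c.F'] V by blast
  moreover have "finite E"
    using attachment_finite[OF _ _ c.E] V R c.R'V finite_subset by blast
  moreover have "F' \<inter> E = {}" using c.F'_E_disj by blast
  ultimately show ?thesis unfolding glue_def hf_weight_def by (simp add: prod.union_disjoint)
qed

lemma rooted_forests_weight_rec:
  fixes w :: "nat \<Rightarrow> 'a::comm_ring_1"
  assumes V: "finite V" and R: "R \<subseteq> V"
  shows "(\<Sum>F\<in>rooted_forests V R. hf_weight w F) =
    (\<Sum>R'\<in>Pow (V - R). (\<Sum>F'\<in>rooted_forests (V - R) R'. hf_weight w F') *
                         (\<Sum>E\<in>attachments R' R. hf_weight w E))"
proof -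
  have finR: "finite R" using R V finite_subset by blast
  have fin: "\<forall>R'\<in>Pow (V - R). finite (rooted_forests (V - R) R' \<times> attachments R' R)"
    using V finR by (auto intro: rooted_forests_finite attachments_finite finite_subset)
  have "(\<Sum>F\<in>rooted_forests V R. hf_weight w F) = (\<Sum>t\<in>glue_data V R. hf_weight w (glue t))"
    using sum.reindex[OF glue_inj[OF V R], of "hf_weight w"] glue_image[OF V R] by (simp add: comp_def)
  also have "\<dots> = (\<Sum>R'\<in>Pow (V - R). \<Sum>p\<in>rooted_forests (V - R) R' \<times> attachments R' R.
      hf_weight w (glue (R', p)))"
    using sum.Sigma[OF _ fin, of "\<lambda>R' p. hf_weight w (glue (R', p))"] V
    unfolding glue_data_def by (simp add: case_prod_eta)
  also have "\<dots> = (\<Sum>R'\<in>Pow (V - R). \<Sum>p\<in>rooted_forests (V - R) R' \<times> attachments R' R.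
      hf_weight w (fst p) * hf_weight w (snd p))"
    by (intro sum.cong refl) (auto intro!: glue_weight[OF V R] simp: glue_data_mem)
  also have "\<dots> = (\<Sum>R'\<in>Pow (V - R). (\<Sum>F'\<in>rooted_forests (V - R) R'. hf_weight w F') *
                         (\<Sum>E\<in>attachments R' R. hf_weight w E))"
    by (simp add: sum_product sum.cartesian_product split_def)
  finally show ?thesis .
qed

section \<open>The weight of attachments\<close>

(* Splitting off the edge that contains a fixed vertex x of M: an attachment of M to R is the
   same as a root \<rho> \<in> R, a block S \<subseteq> M containing x, and an attachment of M - S to R. *)
locale attachment_split =
  fixes M R :: "nat set" and x :: nat
  assumes finM: "finite M" and finR: "finite R" and disj: "M \<inter> R = {}" and x: "x \<in> M"
begin

definition split_data :: "((nat \<times> nat set) \<times> nat set set) set" where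
  "split_data = Sigma (R \<times> {S. S \<subseteq> M \<and> x \<in> S}) (\<lambda>p. attachments (M - snd p) R)"

definition extend :: "(nat \<times> nat set) \<times> nat set set \<Rightarrow> nat set set" where
  "extend = (\<lambda>(p, E0). insert (insert (fst p) (snd p)) E0)"

lemma split_data_mem: "((\<rho>, S), E0) \<in> split_data \<longleftrightarrow> \<rho> \<in> R \<and> S \<subseteq> M \<and> x \<in> S \<and> E0 \<in> attachments (M - S) R"
  unfolding split_data_def by auto

lemma x_notin_rest: "((\<rho>, S), E0) \<in> split_data \<Longrightarrow> B \<in> E0 \<Longrightarrow> x \<notin> B"
  using attachment_avoids[of E0 "M - S" R x B] disj x unfolding split_data_mem by blast

lemma extend_in:
  assumes u: "((\<rho>, S), E0) \<in> split_data"
  shows "extend ((\<rho>, S), E0) \<in> attachments M R"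
proof -
  have h: "\<rho> \<in> R" "S \<subseteq> M" "x \<in> S" "E0 \<in> attachments (M - S) R" using u split_data_mem by auto
  let ?A = "insert \<rho> S"
  have e1: "\<exists>\<sigma>\<in>R. \<exists>T. A = insert \<sigma> T \<and> T \<subseteq> M \<and> T \<noteq> {}" if A: "A \<in> insert ?A E0" for A
  proof (cases "A = ?A")
    case True then show ?thesis using h by blast
  next
    case False
    then have "A \<in> E0" using A by blast
    then obtain \<sigma> T where "\<sigma> \<in> R" "A = insert \<sigma> T" "T \<subseteq> M - S" "T \<noteq> {}" using attachment_edge[OF h(4)] by blast
    then show ?thesis by blast
  qed
  have e2: "\<exists>!B. B \<in> insert ?A E0 \<and> y \<in> B" if y: "y \<in> M" for y
  proof (cases "y \<in> S")
    case True
    show ?thesis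
    proof (rule ex1I[of _ ?A])
      show "?A \<in> insert ?A E0 \<and> y \<in> ?A" using True by blast
      fix B assume B: "B \<in> insert ?A E0 \<and> y \<in> B"
      show "B = ?A"
      proof (rule ccontr)
        assume "B \<noteq> ?A"
        then have "B \<in> E0" using B by blast
        moreover have "y \<notin> M - S" "y \<notin> R" using True y disj by blast+
        ultimately show False using attachment_avoids[OF h(4)] B by blast
      qed
    qed
  next
    case False
    then have yMS: "y \<in> M - S" using y by blast
    then have u1: "\<exists>!B. B \<in> E0 \<and> y \<in> B" using attachment_cover[OF h(4)] by blast
    then obtain B where B: "B \<in> E0" "y \<in> B" by blast
    have B3: "C = B" if "C \<in> E0 \<and> y \<in> C" for C using u1 that B by blast
    have yA: "y \<notin> ?A" using False y disj h(1) by blast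
    show ?thesis
    proof (rule ex1I[of _ B])
      show "B \<in> insert ?A E0 \<and> y \<in> B" using B by blast
      fix C assume "C \<in> insert ?A E0 \<and> y \<in> C"
      then show "C = B" using B3 yA by blast
    qed
  qed
  have "extend ((\<rho>, S), E0) = insert ?A E0" by (simp add: extend_def)
  then show ?thesis using attachmentsI[OF e1 e2] by simp
qed

(* extend is injective: the block edge is the unique edge through x, and the root and block
   are recovered from it since M and R are disjoint. *)
lemma extend_inj: "inj_on extend split_data"
proof (rule inj_onI)
  fix a b assume a: "a \<in> split_data" and b: "b \<in> split_data" and eq: "extend a = extend b"
  obtain \<rho>1 S1 E1 where a': "a = ((\<rho>1, S1), E1)" using prod.collapse by metis
  obtain \<rho>2 S2 E2 where b': "b = ((\<rho>2, S2), E2)" using prod.collapse by metis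
  have h1: "\<rho>1 \<in> R" "S1 \<subseteq> M" "x \<in> S1" using a a' split_data_mem by auto
  have h2: "\<rho>2 \<in> R" "S2 \<subseteq> M" "x \<in> S2" using b b' split_data_mem by auto
  have n1: "insert \<rho>1 S1 \<notin> E1" "insert \<rho>2 S2 \<notin> E1"
    using x_notin_rest[of \<rho>1 S1 E1] a a' h1(3) h2(3) by blast+
  have n2: "insert \<rho>2 S2 \<notin> E2" using x_notin_rest[of \<rho>2 S2 E2] b b' h2(3) by blast
  have E: "insert (insert \<rho>1 S1) E1 = insert (insert \<rho>2 S2) E2"
    using eq unfolding a' b' extend_def by simp
  have AA: "insert \<rho>1 S1 = insert \<rho>2 S2"
    using E n1(2) by (metis insertCI insertE)
  have r: "\<rho>1 = \<rho>2" using AA h1(1) h2(1) h1(2) h2(2) disj by blast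
  have "\<rho>1 \<notin> S1" "\<rho>2 \<notin> S2" using h1 h2 disj by blast+
  then have S: "S1 = S2" using AA r by (metis Diff_insert_absorb)
  have "E1 = insert (insert \<rho>1 S1) E1 - {insert \<rho>1 S1}" using n1(1) by simp
  also have "\<dots> = insert (insert \<rho>2 S2) E2 - {insert \<rho>2 S2}" using E AA by simp
  also have "\<dots> = E2" using n2 by simp
  finally show "a = b" using a' b' r S by simp
qed

(* Every attachment of M arises: remove its edge through x. *)
lemma extend_surj:
  assumes E: "E \<in> attachments M R"
  shows "E \<in> extend ` split_data"
proof -
  obtain A where A: "A \<in> E" "x \<in> A" using attachment_cover[OF E x] by blast
  obtain \<rho> S where h: "\<rho> \<in> R" "A = insert \<rho> S" "S \<subseteq> M" "S \<noteq> {}"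
    using attachment_edge[OF E A(1)] by blast
  have xS: "x \<in> S" using A h x disj by blast
  have uniq: "B = C" if "y \<in> M" "B \<in> E" "C \<in> E" "y \<in> B" "y \<in> C" for y B C
    using attachment_cover[OF E that(1)] that by blast
  have "E - {A} \<in> attachments (M - S) R"
  proof (rule attachmentsI)
    fix B assume B: "B \<in> E - {A}"
    then obtain \<sigma> T where t: "\<sigma> \<in> R" "B = insert \<sigma> T" "T \<subseteq> M" "T \<noteq> {}"
      using attachment_edge[OF E] by blast
    have "T \<inter> S = {}" using uniq[of _ A B] A h t B by blast
    then show "\<exists>\<sigma>\<in>R. \<exists>T. B = insert \<sigma> T \<and> T \<subseteq> M - S \<and> T \<noteq> {}" using t by blast
  next
    fix y assume y: "y \<in> M - S"
    then have "y \<notin> A" using h disj by blast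
    then show "\<exists>!C. C \<in> E - {A} \<and> y \<in> C" using attachment_cover[OF E, of y] y by blast
  qed
  then have "((\<rho>, S), E - {A}) \<in> split_data" using h xS split_data_mem by blast
  moreover have "extend ((\<rho>, S), E - {A}) = E" using insert_Diff[OF A(1)] h(2) unfolding extend_def by simp
  ultimately show ?thesis by (metis image_eqI)
qed

lemma extend_image: "extend ` split_data = attachments M R"
  using extend_in extend_surj by auto

lemma extend_weight:
  assumes u: "((\<rho>, S), E0) \<in> split_data"
  shows "hf_weight w (extend ((\<rho>, S), E0)) = w (Suc (card S)) * hf_weight w E0"
proof -
  have h: "\<rho> \<in> R" "S \<subseteq> M" "x \<in> S" "E0 \<in> attachments (M - S) R" using u split_data_mem by auto
  have "insert \<rho> S \<notin> E0" using x_notin_rest[OF u] h by blast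
  moreover have "finite E0" using attachment_finite[OF _ finR h(4)] finM by blast
  moreover have "card (insert \<rho> S) = Suc (card S)"
    using h disj finM finite_subset by (metis card_insert_disjoint disjoint_iff subsetD)
  ultimately show ?thesis unfolding hf_weight_def extend_def by simp
qed

lemma attachments_weight_rec:
  fixes w :: "nat \<Rightarrow> 'a::comm_ring_1"
  shows "(\<Sum>E\<in>attachments M R. hf_weight w E) =
    of_nat (card R) * (\<Sum>S\<in>{S. S \<subseteq> M \<and> x \<in> S}. w (Suc (card S)) *
                          (\<Sum>E\<in>attachments (M - S) R. hf_weight w E))"
proof -
  let ?B = "{S. S \<subseteq> M \<and> x \<in> S}"
  have fin1: "finite (R \<times> ?B)" using finR finM by simp
  have fin2: "\<forall>p\<in>R \<times> ?B. finite (attachments (M - snd p) R)"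
    using attachments_finite finM finR by blast
  have "(\<Sum>E\<in>attachments M R. hf_weight w E) = (\<Sum>u\<in>split_data. hf_weight w (extend u))"
    using sum.reindex[OF extend_inj, of "hf_weight w"] extend_image by (simp add: comp_def)
  also have "\<dots> = (\<Sum>p\<in>R \<times> ?B. \<Sum>E0\<in>attachments (M - snd p) R. hf_weight w (extend (p, E0)))"
    using sum.Sigma[OF fin1 fin2, of "\<lambda>p E0. hf_weight w (extend (p, E0))"]
    unfolding split_data_def by (simp add: case_prod_eta)
  also have "\<dots> = (\<Sum>p\<in>R \<times> ?B. w (Suc (card (snd p))) *
      (\<Sum>E0\<in>attachments (M - snd p) R. hf_weight w E0))"
    unfolding sum_distrib_left
    by (intro sum.cong refl) (auto intro!: extend_weight simp: split_data_mem)
  also have "\<dots> = (\<Sum>\<rho>\<in>R. \<Sum>S\<in>?B. w (Suc (card S)) * (\<Sum>E0\<in>attachments (M - S) R. hf_weight w E0))"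
    by (rule sum.cartesian_product[symmetric, where A=R and B="?B",
          of "\<lambda>\<rho> S. w (Suc (card S)) * (\<Sum>E0\<in>attachments (M - S) R. hf_weight w E0)",
          simplified split_def])
  finally show ?thesis by simp
qed

end

lemma sum_Pow_card:
  fixes h :: "nat \<Rightarrow> 'a::comm_semiring_1"
  assumes X: "finite X"
  shows "(\<Sum>S\<in>Pow X. h (card S)) = (\<Sum>j=0..card X. of_nat (card X choose j) * h j)"
proof -
  have "(\<Sum>S\<in>Pow X. h (card S)) = (\<Sum>j\<in>{0..card X}. \<Sum>S\<in>{S. S \<in> Pow X \<and> card S = j}. h (card S))"
    by (rule sum.group[symmetric]) (use X card_mono in auto)
  also have "\<dots> = (\<Sum>j=0..card X. of_nat (card X choose j) * h j)"
  proof (rule sum.cong[OF refl])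
    fix j
    have "(\<Sum>S\<in>{S. S \<in> Pow X \<and> card S = j}. h (card S)) = (\<Sum>S\<in>{S. S \<subseteq> X \<and> card S = j}. h j)"
      by (rule sum.cong) auto
    then show "(\<Sum>S\<in>{S. S \<in> Pow X \<and> card S = j}. h (card S)) = of_nat (card X choose j) * h j"
      using n_subsets[OF X] by simp
  qed
  finally show ?thesis .
qed

lemma sum_subsets_containing:
  fixes g :: "nat \<Rightarrow> nat \<Rightarrow> 'a::comm_semiring_1"
  assumes M: "finite M" and x: "x \<in> M" and m: "card M = Suc m"
  shows "(\<Sum>S\<in>{S. S \<subseteq> M \<and> x \<in> S}. g (card S) (card (M - S))) =
    (\<Sum>j=0..m. of_nat (m choose j) * g (Suc j) (m - j))"
proof -
  have inj: "inj_on (insert x) (Pow (M - {x}))"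
    by (rule inj_onI) (metis Diff_insert_absorb PowD subset_Diff_insert)
  have img: "insert x ` Pow (M - {x}) = {S. S \<subseteq> M \<and> x \<in> S}"
  proof (intro set_eqI iffI)
    fix S assume "S \<in> {S. S \<subseteq> M \<and> x \<in> S}"
    then have "S = insert x (S - {x})" "S - {x} \<in> Pow (M - {x})" by auto
    then show "S \<in> insert x ` Pow (M - {x})" by (metis image_eqI)
  qed (use x in auto)
  have cM: "card (M - {x}) = m" using m x M by simp
  have "(\<Sum>S\<in>{S. S \<subseteq> M \<and> x \<in> S}. g (card S) (card (M - S))) =
      (\<Sum>S\<in>Pow (M - {x}). g (card (insert x S)) (card (M - insert x S)))"
    using sum.reindex[OF inj, of "\<lambda>S. g (card S) (card (M - S))"] unfolding img by (simp add: comp_def)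
  also have "\<dots> = (\<Sum>S\<in>Pow (M - {x}). g (Suc (card S)) (m - card S))"
  proof (rule sum.cong[OF refl])
    fix S assume S: "S \<in> Pow (M - {x})"
    then have fS: "finite S" using M finite_subset by blast
    have "M - insert x S = (M - {x}) - S" by blast
    then have "card (M - insert x S) = m - card S" using card_Diff_subset[OF fS] S cM by simp
    moreover have "x \<notin> S" using S by blast
    then have "card (insert x S) = Suc (card S)" using fS by simp
    ultimately show "g (card (insert x S)) (card (M - insert x S)) = g (Suc (card S)) (m - card S)"
      by simp
  qed
  also have "\<dots> = (\<Sum>j=0..m. of_nat (m choose j) * g (Suc j) (m - j))"
    using sum_Pow_card[of "M - {x}" "\<lambda>j. g (Suc j) (m - j)"] M cM by simp
  finally show ?thesis .
qed

(* a(M,R) = P_{|M|}(|R|): by attachments_weight_rec, a satisfies the recurrence P_poly_rec. *)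
lemma attachments_weight:
  fixes w :: "nat \<Rightarrow> 'a::field_char_0"
  assumes "finite M" "finite R" "M \<inter> R = {}"
  shows "(\<Sum>E\<in>attachments M R. hf_weight w E) = P_poly (card M) (of_nat (card R)) w"
  using assms
proof (induction "card M" arbitrary: M rule: less_induct)
  case less
  show ?case
  proof (cases "M = {}")
    case True
    then show ?thesis by (simp add: attachments_empty P_poly_0 hf_weight_def)
  next
    case False
    then obtain x where x: "x \<in> M" by blast
    interpret attachment_split M R x using less.prems x by unfold_locales auto
    obtain m where m: "card M = Suc m" using x less.prems(1) by (metis card_Suc_Diff1)
    let ?r = "of_nat (card R) :: 'a"
    have IH: "(\<Sum>E\<in>attachments (M - S) R. hf_weight w E) = P_poly (card (M - S)) ?r w"
      if "S \<in> {S. S \<subseteq> M \<and> x \<in> S}" for S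
    proof -
      have "card (M - S) < card M" using that less.prems(1) x by (intro psubset_card_mono) auto
      then show ?thesis using less.hyps[of "M - S"] less.prems by auto
    qed
    have "(\<Sum>E\<in>attachments M R. hf_weight w E) =
      ?r * (\<Sum>S\<in>{S. S \<subseteq> M \<and> x \<in> S}. w (Suc (card S)) * P_poly (card (M - S)) ?r w)"
      unfolding attachments_weight_rec using IH by simp
    also have "\<dots> = ?r * (\<Sum>j=0..m. of_nat (m choose j) * (w (Suc (Suc j)) * P_poly (m - j) ?r w))"
      using sum_subsets_containing[OF less.prems(1) x m, of "\<lambda>a b. w (Suc a) * P_poly b ?r w"] by simp
    also have "\<dots> = P_poly (Suc m) ?r w"
      unfolding P_poly_rec by (simp add: mult.assoc numeral_2_eq_2)
    finally show ?thesis using m by simp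
  qed
qed

section \<open>The closed form for rooted forests\<close>

lemma rooted_forests_weight:
  fixes w :: "nat \<Rightarrow> 'a::field_char_0"
  assumes "finite V" "R \<subseteq> V"
  shows "(\<Sum>F\<in>rooted_forests V R. hf_weight w F) = forest_formula w (card V) (card R)"
  using assms
proof (induction "card V" arbitrary: V R rule: less_induct)
  case less
  note V = less.prems(1) and R = less.prems(2)
  show ?case
  proof (cases "R = {}")
    case True
    then show ?thesis using V
      by (cases "V = {}") (simp_all add: rooted_forests_empty rooted_forests_no_root forest_formula_def hf_weight_def)
  next
    case False
    have finR: "finite R" using R V finite_subset by blast
    have cR: "1 \<le> card R" using False finR by (simp add: Suc_le_eq card_gt_0_iff)
    have cVR: "card (V - R) < card V" using False R V by (intro psubset_card_mono) auto
    have cV: "card V = card R + card (V - R)" using card_Diff_subset[OF finR R] card_mono[OF V R] by simp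
    let ?s = "card (V - R)" and ?r = "of_nat (card R) :: 'a"
    have "(\<Sum>F\<in>rooted_forests V R. hf_weight w F) =
      (\<Sum>R'\<in>Pow (V - R). (\<Sum>F'\<in>rooted_forests (V - R) R'. hf_weight w F') * (\<Sum>E\<in>attachments R' R. hf_weight w E))"
      by (rule rooted_forests_weight_rec[OF V R])
    also have "\<dots> = (\<Sum>R'\<in>Pow (V - R). forest_formula w ?s (card R') * P_poly (card R') ?r w)"
    proof (rule sum.cong[OF refl])
      fix R' assume R': "R' \<in> Pow (V - R)"
      have fR': "finite R'" using R' V finite_subset by blast
      have "(\<Sum>F'\<in>rooted_forests (V - R) R'. hf_weight w F') = forest_formula w ?s (card R')"
        using less.hyps[OF cVR, of R'] V R' by auto
      moreover have "(\<Sum>E\<in>attachments R' R. hf_weight w E) = P_poly (card R') ?r w"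
        using attachments_weight[OF fR' finR] R' by blast
      ultimately show "(\<Sum>F'\<in>rooted_forests (V - R) R'. hf_weight w F') * (\<Sum>E\<in>attachments R' R. hf_weight w E) =
          forest_formula w ?s (card R') * P_poly (card R') ?r w" by simp
    qed
    also have "\<dots> = (\<Sum>m=0..?s. of_nat (?s choose m) * (forest_formula w ?s m * P_poly m ?r w))"
      using sum_Pow_card[of "V - R" "\<lambda>m. forest_formula w ?s m * P_poly m ?r w"] V by simp
    also have "\<dots> = forest_formula w (card R + ?s) (card R)"
      using forest_formula_rec[OF cR, of w ?s] by (simp add: mult.assoc)
    finally show ?thesis using cV by simp
  qed
qed

section \<open>Translation to the notions of the statement\<close>

definition comps_on :: "nat set \<Rightarrow> nat set set \<Rightarrow> nat set set" where
  "comps_on V F = (\<lambda>u. {v \<in> V. conn F u v}) ` V"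

lemma components_eq: "components n F = comps_on {1..n} F"
  unfolding components_def comps_on_def connected_by_conn ..

lemma spanning_iff: "spanning_hyperforest n F \<longleftrightarrow> F \<subseteq> edges_on {1..n} \<and> cycle_free F"
  unfolding spanning_hyperforest_def hyperedges_def edges_on_def cycle_free_def by simp

lemma roots_iff:
  assumes R: "R \<subseteq> V"
  shows "(\<forall>C\<in>comps_on V F. card (R \<inter> C) = 1) \<longleftrightarrow>
    (\<forall>u\<in>V. \<exists>\<rho>\<in>R. conn F u \<rho>) \<and> (\<forall>\<rho>\<in>R. \<forall>\<sigma>\<in>R. conn F \<rho> \<sigma> \<longrightarrow> \<rho> = \<sigma>)"
proof -
  have "R \<inter> {v \<in> V. conn F u v} = {\<rho> \<in> R. conn F u \<rho>}" for u using R by blast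
  then have "(\<forall>C\<in>comps_on V F. card (R \<inter> C) = 1) \<longleftrightarrow> (\<forall>u\<in>V. card {\<rho> \<in> R. conn F u \<rho>} = 1)"
    unfolding comps_on_def by auto
  also have "\<dots> \<longleftrightarrow> (\<forall>u\<in>V. \<exists>!\<rho>. \<rho> \<in> R \<and> conn F u \<rho>)"
    by (simp add: card_1_singleton_iff Ex1_def set_eq_iff) blast
  also have "\<dots> \<longleftrightarrow> (\<forall>u\<in>V. \<exists>\<rho>\<in>R. conn F u \<rho>) \<and> (\<forall>\<rho>\<in>R. \<forall>\<sigma>\<in>R. conn F \<rho> \<sigma> \<longrightarrow> \<rho> = \<sigma>)"
    using R conn.crefl conn_sym conn_trans by (smt (verit) subsetD)
  finally show ?thesis .
qed

lemma card_comps: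
  assumes "F \<in> rooted_forests V R"
  shows "card (comps_on V F) = card R"
proof -
  have R: "R \<subseteq> V" and ex: "\<forall>u\<in>V. \<exists>\<rho>\<in>R. conn F u \<rho>" and sep: "\<forall>\<rho>\<in>R. \<forall>\<sigma>\<in>R. conn F \<rho> \<sigma> \<longrightarrow> \<rho> = \<sigma>"
    using assms unfolding rooted_forests_def by blast+
  let ?c = "\<lambda>u. {v \<in> V. conn F u v}"
  have same: "?c u = ?c \<rho>" if "conn F u \<rho>" for u \<rho>
    using that conn_sym conn_trans by blast
  have "comps_on V F = ?c ` R"
  proof
    show "comps_on V F \<subseteq> ?c ` R"
    proof
      fix C assume "C \<in> comps_on V F"
      then obtain u where u: "u \<in> V" "C = ?c u" unfolding comps_on_def by blast
      then obtain \<rho> where "\<rho> \<in> R" "conn F u \<rho>" using ex by blast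
      then show "C \<in> ?c ` R" using same u by blast
    qed
    show "?c ` R \<subseteq> comps_on V F" unfolding comps_on_def using R by blast
  qed
  moreover have "inj_on ?c R"
  proof (rule inj_onI)
    fix \<rho> \<sigma> assume r: "\<rho> \<in> R" "\<sigma> \<in> R" "?c \<rho> = ?c \<sigma>"
    have "\<sigma> \<in> ?c \<sigma>" using r R by (auto simp: conn.crefl)
    then have "conn F \<rho> \<sigma>" using r by blast
    then show "\<rho> = \<sigma>" using sep r by blast
  qed
  ultimately show ?thesis by (simp add: card_image)
qed

lemma rooted_iff_rooted_forest: "(F, R) \<in> rooted_spanning_hyperforests n \<longleftrightarrow> F \<in> rooted_forests {1..n} R"
proof (cases "R \<subseteq> {1..n}")
  case True
  have "(F, R) \<in> rooted_spanning_hyperforests n \<longleftrightarrow>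
      (F \<subseteq> edges_on {1..n} \<and> cycle_free F) \<and> (\<forall>C\<in>comps_on {1..n} F. card (R \<inter> C) = 1)"
    unfolding rooted_spanning_hyperforests_def spanning_iff components_eq using True by simp
  also have "\<dots> \<longleftrightarrow> (F \<subseteq> edges_on {1..n} \<and> cycle_free F) \<and>
      ((\<forall>u\<in>{1..n}. \<exists>\<rho>\<in>R. conn F u \<rho>) \<and> (\<forall>\<rho>\<in>R. \<forall>\<sigma>\<in>R. conn F \<rho> \<sigma> \<longrightarrow> \<rho> = \<sigma>))"
    by (simp only: roots_iff[OF True])
  also have "\<dots> \<longleftrightarrow> F \<in> rooted_forests {1..n} R" unfolding rooted_forests_def using True by simp
  finally show ?thesis .
next
  case False
  then show ?thesis unfolding rooted_spanning_hyperforests_def rooted_forests_def by simp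
qed

lemma rooted_char:
  "((F, R) \<in> rooted_spanning_hyperforests n \<and> card (components n F) = r) \<longleftrightarrow>
   (R \<subseteq> {1..n} \<and> card R = r \<and> F \<in> rooted_forests {1..n} R)"
proof -
  have "F \<in> rooted_forests {1..n} R \<Longrightarrow> R \<subseteq> {1..n}" unfolding rooted_forests_def by simp
  moreover have "F \<in> rooted_forests {1..n} R \<Longrightarrow> card (components n F) = card R"
    unfolding components_eq by (rule card_comps)
  ultimately show ?thesis unfolding rooted_iff_rooted_forest by auto
qed

lemma t_rooted_by_roots:
  "t_rooted n r w = (\<Sum>R\<in>{R. R \<subseteq> {1..n} \<and> card R = r}. \<Sum>F\<in>rooted_forests {1..n} R. hf_weight w F)"
proof -
  let ?A = "{R. R \<subseteq> {1..n} \<and> card R = r}"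
  have set: "{(F, R) \<in> rooted_spanning_hyperforests n. card (components n F) = r} = prod.swap ` (Sigma ?A (rooted_forests {1..n}))"
  proof (intro set_eqI iffI)
    fix p assume "p \<in> {(F, R) \<in> rooted_spanning_hyperforests n. card (components n F) = r}"
    then obtain F R where p: "p = (F, R)" "(F, R) \<in> rooted_spanning_hyperforests n" "card (components n F) = r" by blast
    then have "(R, F) \<in> Sigma ?A (rooted_forests {1..n})" using rooted_char by blast
    then show "p \<in> prod.swap ` (Sigma ?A (rooted_forests {1..n}))" using p by force
  next
    fix p assume "p \<in> prod.swap ` (Sigma ?A (rooted_forests {1..n}))"
    then obtain R F where p: "p = (F, R)" "(R, F) \<in> Sigma ?A (rooted_forests {1..n})" by auto
    then show "p \<in> {(F, R) \<in> rooted_spanning_hyperforests n. card (components n F) = r}"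
      using rooted_char by blast
  qed
  have fin1: "finite ?A" by simp
  have fin2: "\<forall>R\<in>?A. finite (rooted_forests {1..n} R)" using rooted_forests_finite by blast
  have "t_rooted n r w = (\<Sum>p\<in>prod.swap ` (Sigma ?A (rooted_forests {1..n})). (\<lambda>(F, R). hf_weight w F) p)"
    unfolding t_rooted_def set ..
  also have "\<dots> = (\<Sum>q\<in>Sigma ?A (rooted_forests {1..n}). hf_weight w (snd q))"
    by (subst sum.reindex) (auto simp: case_prod_beta)
  also have "\<dots> = (\<Sum>R\<in>?A. \<Sum>F\<in>rooted_forests {1..n} R. hf_weight w F)"
    using sum.Sigma[OF fin1 fin2, of "\<lambda>R F. hf_weight w F"] by (simp add: case_prod_beta)
  finally show ?thesis .
qed

(* t_{n,r} = C(n,r) f(n,r), since f({1..n},R) only depends on |R|. *)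
lemma t_rooted_formula:
  fixes w :: "nat \<Rightarrow> 'a::field_char_0"
  shows "t_rooted n r w = of_nat (n choose r) * forest_formula w n r"
proof -
  have "t_rooted n r w = (\<Sum>R\<in>{R. R \<subseteq> {1..n} \<and> card R = r}. forest_formula w n r)"
    unfolding t_rooted_by_roots
  proof (rule sum.cong[OF refl])
    fix R assume "R \<in> {R. R \<subseteq> {1..n} \<and> card R = r}"
    then show "(\<Sum>F\<in>rooted_forests {1..n} R. hf_weight w F) = forest_formula w n r" using rooted_forests_weight[of "{1..n}" R w] by simp
  qed
  also have "\<dots> = of_nat (n choose r) * forest_formula w n r"
    using n_subsets[of "{1..n}" r] by simp
  finally show ?thesis .
qed

lemma unrooted_eq:
  assumes v: "v \<in> {1..n}"
  shows "rooted_forests {1..n} {v} = {F. spanning_hyperforest n F \<and> card (components n F) = 1}"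
proof (intro set_eqI iffI)
  fix F assume F: "F \<in> rooted_forests {1..n} {v}"
  have "F \<subseteq> edges_on {1..n}" "cycle_free F" using F by (simp_all add: rooted_forests_def)
  moreover have "card (comps_on {1..n} F) = 1" using card_comps[OF F] by simp
  ultimately show "F \<in> {F. spanning_hyperforest n F \<and> card (components n F) = 1}"
    by (simp add: spanning_iff components_eq)
next
  fix F assume F: "F \<in> {F. spanning_hyperforest n F \<and> card (components n F) = 1}"
  then have sp: "F \<subseteq> edges_on {1..n}" "cycle_free F" and c: "card (comps_on {1..n} F) = 1"
    unfolding spanning_iff components_eq by auto
  obtain C where C: "comps_on {1..n} F = {C}" using c card_1_singletonE by blast
  have mem: "{x \<in> {1..n}. conn F u x} \<in> comps_on {1..n} F" if "u \<in> {1..n}" for u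
    unfolding comps_on_def using that by (rule imageI)
  have ex: "conn F u v" if u: "u \<in> {1..n}" for u
  proof -
    have "{x \<in> {1..n}. conn F u x} = C" using mem[OF u] C by simp
    moreover have "{x \<in> {1..n}. conn F v x} = C" using mem[OF v] C by simp
    moreover have "v \<in> {x \<in> {1..n}. conn F v x}" using v by (simp add: conn.crefl)
    ultimately have "v \<in> {x \<in> {1..n}. conn F u x}" by simp
    then show ?thesis by simp
  qed
  show "F \<in> rooted_forests {1..n} {v}"
    unfolding rooted_forests_def
  proof (intro CollectI conjI ballI impI)
    show "F \<subseteq> edges_on {1..n}" "cycle_free F" by (rule sp(1), rule sp(2))
    show "{v} \<subseteq> {1..n}" using v by simp
    show "\<exists>\<rho>\<in>{v}. conn F u \<rho>" if "u \<in> {1..n}" for u using ex[OF that] by simp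
    show "\<rho> = \<sigma>" if "\<rho> \<in> {v}" "\<sigma> \<in> {v}" "conn F \<rho> \<sigma>" for \<rho> \<sigma> using that by simp
  qed
qed

(* Each hypertree has n choices of root. *)
lemma t_rooted_1_u_unrooted:
  "t_rooted n 1 w = of_nat n * u_unrooted n 1 w"
proof -
  have "t_rooted n 1 w = (\<Sum>R\<in>{R. R \<subseteq> {1..n} \<and> card R = 1}. u_unrooted n 1 w)"
    unfolding t_rooted_by_roots
  proof (rule sum.cong[OF refl])
    fix R assume R: "R \<in> {R. R \<subseteq> {1..n} \<and> card R = 1}"
    then obtain v where "R = {v}" using card_1_singletonE by blast
    moreover have "v \<in> {1..n}" using R \<open>R = {v}\<close> by blast
    ultimately show "(\<Sum>F\<in>rooted_forests {1..n} R. hf_weight w F) = u_unrooted n 1 w"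
      unfolding u_unrooted_def using unrooted_eq by simp
  qed
  also have "\<dots> = of_nat n * u_unrooted n 1 w"
    using n_subsets[of "{1..n}" 1] by simp
  finally show ?thesis .
qed

lemma choose_times_ratio:
  assumes "1 \<le> r" "n \<noteq> 0"
  shows "of_nat (n choose r) * (of_nat r / of_nat n) = (of_nat ((n - 1) choose (r - 1)) :: 'a::field_char_0)"
proof -
  have "r * (n choose r) = n * ((n - 1) choose (r - 1))"
    using times_binomial_minus1_eq[of r n] assms(1) by simp
  then have "(of_nat r :: 'a) * of_nat (n choose r) = of_nat n * of_nat ((n - 1) choose (r - 1))"
    by (metis of_nat_mult)
  then show ?thesis using assms(2) by (simp add: field_simps)
qed

lemma t_rooted_closed_form:
  fixes w :: "nat \<Rightarrow> 'a::field_char_0"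
  assumes "1 \<le> r" "n \<noteq> 0"
  shows "t_rooted n r w = of_nat ((n - 1) choose (r - 1)) * P_poly (n - r) (of_nat n) w"
proof -
  have "t_rooted n r w = (of_nat (n choose r) * (of_nat r / of_nat n)) * P_poly (n - r) (of_nat n) w"
    unfolding t_rooted_formula forest_formula_def using assms(2) by simp
  then show ?thesis by (simp only: choose_times_ratio[OF assms])
qed

theorem mainTheorem7:
  fixes w :: "nat \<Rightarrow> 'a::field_char_0" and n :: nat
  assumes "1 \<le> n"
  shows "(\<forall>r. 1 \<le> r \<and> r \<le> n \<longrightarrow>
            t_rooted n r w = of_nat ((n - 1) choose (r - 1)) * P_poly (n - r) (of_nat n) w)
       \<and> t_rooted n 0 w = 0
       \<and> t_rooted n 1 w = P_poly (n - 1) (of_nat n) w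
       \<and> u_unrooted n 1 w = P_poly (n - 1) (of_nat n) w / of_nat n"
proof -
  have n0: "n \<noteq> 0" using assms by simp
  have t0: "t_rooted n 0 w = 0" unfolding t_rooted_formula forest_formula_def using n0 by simp
  have t1: "t_rooted n 1 w = P_poly (n - 1) (of_nat n) w" using t_rooted_closed_form[of 1 n] n0 by simp
  then have "u_unrooted n 1 w = P_poly (n - 1) (of_nat n) w / of_nat n"
    using t_rooted_1_u_unrooted[of n w] n0 by (simp add: eq_divide_eq mult.commute)
  then show ?thesis using t_rooted_closed_form n0 t0 t1 by blast
qed

end
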